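(* For every finite-dimensional bipartite quantum channel $\mathcal{N}_{A'B'\to AB}$, $$\log|A'|\le S(R_AA|R_BB)_{\Phi^{\mathcal{N}}}-S^{\leftrightarrow}[A|B]_{\mathcal{N}}.$$
   Context: $\Phi^{\mathcal{N}}_{R_AAR_BB}=\mathcal{N}(\Phi_{R_AA'}\otimes\Phi_{R_BB'})$ with $\Phi$ the normalized maximally entangled state, $R_A\simeq A'$, $R_B\simeq B'$. $D$ is the Umegaki relative entropy. For completely positive maps $\mathcal{K},\mathcal{L}$ from $A'B'$ to $AB$, the bidirectional channel divergence is $D^{\leftrightarrow}[\mathcal{K}\Vert\mathcal{L}]:=\sup_{\rho_{R_AA'},\omega_{R_BB'}}D(\mathcal{K}(\rho\otimes\omega)\Vert\mathcal{L}(\rho\otimes\omega))$, supremum over product states with arbitrary reference systems $R_A,R_B$. With $\mathcal{R}_{A'\to A}(Y)=\operatorname{tr}(Y)\mathbbm{1}_A$, the bidirectional von Neumann conditional entropy is $S^{\leftrightarrow}[A|B]_{\mathcal{N}}:=-\inf_{\mathcal{M}\in\mathrm{Q}(B',B)}D^{\leftrightarrow}[\mathcal{N}\Vert\mathcal{R}_{A'\to A}\otimes\mathcal{M}_{B'\to B}]$. For states, $S(X|Y)=S(XY)-S(Y)$. *)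

theory Defs
  imports "HOL-Library.Extended_Real" "Jordan_Normal_Form.Matrix"
begin

definition adj :: "complex mat \<Rightarrow> complex mat" where
  "adj A = mat (dim_col A) (dim_row A) (\<lambda>(i,j). cnj (A $$ (j,i)))"

definition unitary_mat :: "nat \<Rightarrow> complex mat \<Rightarrow> bool" where
  "unitary_mat n U \<longleftrightarrow> U \<in> carrier_mat n n \<and> U * adj U = 1\<^sub>m n \<and> adj U * U = 1\<^sub>m n"

definition hermitian_mat :: "nat \<Rightarrow> complex mat \<Rightarrow> bool" where
  "hermitian_mat n A \<longleftrightarrow> A \<in> carrier_mat n n \<and> adj A = A"

definition qform :: "complex mat \<Rightarrow> complex vec \<Rightarrow> complex" where
  "qform A v = (\<Sum>i<dim_vec v. \<Sum>j<dim_vec v. cnj (v $ i) * A $$ (i,j) * v $ j)"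

definition psd_mat :: "nat \<Rightarrow> complex mat \<Rightarrow> bool" where
  "psd_mat n A \<longleftrightarrow> hermitian_mat n A \<and>
     (\<forall>v \<in> carrier_vec n. Im (qform A v) = 0 \<and> 0 \<le> Re (qform A v))"

definition mtrace :: "complex mat \<Rightarrow> complex" where
  "mtrace A = (\<Sum>i<dim_row A. A $$ (i,i))"

definition density_mat :: "nat \<Rightarrow> complex mat \<Rightarrow> bool" where
  "density_mat n \<rho> \<longleftrightarrow> psd_mat n \<rho> \<and> mtrace \<rho> = 1"

text \<open>Kronecker (tensor) product; index of \<open>A \<otimes> B\<close> is \<open>i * dim B + i'\<close>.\<close>
definition tensor_mat :: "complex mat \<Rightarrow> complex mat \<Rightarrow> complex mat" where
  "tensor_mat A B = mat (dim_row A * dim_row B) (dim_col A * dim_col B)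
     (\<lambda>(i,j). A $$ (i div dim_row B, j div dim_col B) * B $$ (i mod dim_row B, j mod dim_col B))"

definition ptrace2 :: "nat \<Rightarrow> nat \<Rightarrow> complex mat \<Rightarrow> complex mat" where
  "ptrace2 m n X = mat m m (\<lambda>(i,j). \<Sum>k<n. X $$ (i*n + k, j*n + k))"

definition ptrace1 :: "nat \<Rightarrow> nat \<Rightarrow> complex mat \<Rightarrow> complex mat" where
  "ptrace1 m n X = mat n n (\<lambda>(i,j). \<Sum>k<m. X $$ (k*n + i, k*n + j))"

text \<open>Swap unitary \<open>\<complex>^m \<otimes> \<complex>^n \<rightarrow> \<complex>^n \<otimes> \<complex>^m\<close>, \<open>|a,b\<rangle> \<mapsto> |b,a\<rangle>\<close>.\<close>
definition swap_mat :: "nat \<Rightarrow> nat \<Rightarrow> complex mat" where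
  "swap_mat m n = mat (n*m) (m*n)
     (\<lambda>(i,j). if i div m = j mod n \<and> i mod m = j div n then 1 else 0)"

definition max_ent :: "nat \<Rightarrow> complex mat" where
  "max_ent d = mat (d*d) (d*d)
     (\<lambda>(i,j). if i div d = i mod d \<and> j div d = j mod d then 1 / of_nat d else 0)"

text \<open>\<open>(id_k \<otimes> N)(X)\<close> for \<open>X\<close> on \<open>\<complex>^k \<otimes> \<complex>^din\<close>; \<open>N\<close> maps \<open>din\<times>din\<close> to \<open>dout\<times>dout\<close> matrices.\<close>
definition id_tensor_map ::
  "nat \<Rightarrow> nat \<Rightarrow> nat \<Rightarrow> (complex mat \<Rightarrow> complex mat) \<Rightarrow> complex mat \<Rightarrow> complex mat" where
  "id_tensor_map k din dout N X = mat (k*dout) (k*dout)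
     (\<lambda>(i,j). N (mat din din (\<lambda>(p,q). X $$ ((i div dout)*din + p, (j div dout)*din + q)))
               $$ (i mod dout, j mod dout))"

definition linear_map :: "nat \<Rightarrow> nat \<Rightarrow> (complex mat \<Rightarrow> complex mat) \<Rightarrow> bool" where
  "linear_map din dout N \<longleftrightarrow>
     (\<forall>X \<in> carrier_mat din din. N X \<in> carrier_mat dout dout) \<and>
     (\<forall>X \<in> carrier_mat din din. \<forall>Y \<in> carrier_mat din din. \<forall>c::complex.
         N (c \<cdot>\<^sub>m X + Y) = c \<cdot>\<^sub>m N X + N Y)"

definition completely_positive :: "nat \<Rightarrow> nat \<Rightarrow> (complex mat \<Rightarrow> complex mat) \<Rightarrow> bool" where
  "completely_positive din dout N \<longleftrightarrow> linear_map din dout N \<and>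
     (\<forall>k X. psd_mat (k*din) X \<longrightarrow> psd_mat (k*dout) (id_tensor_map k din dout N X))"

definition quantum_channel :: "nat \<Rightarrow> nat \<Rightarrow> (complex mat \<Rightarrow> complex mat) \<Rightarrow> bool" where
  "quantum_channel din dout N \<longleftrightarrow> completely_positive din dout N \<and>
     (\<forall>X \<in> carrier_mat din din. mtrace (N X) = mtrace X)"

definition spec_decomp :: "nat \<Rightarrow> complex mat \<Rightarrow> complex mat \<times> (nat \<Rightarrow> real) \<Rightarrow> bool" where
  "spec_decomp n A UL \<longleftrightarrow> unitary_mat n (fst UL) \<and>
     A = fst UL * mat n n (\<lambda>(i,j). if i = j then complex_of_real (snd UL i) else 0) * adj (fst UL)"

definition mat_fun :: "nat \<Rightarrow> (real \<Rightarrow> real) \<Rightarrow> complex mat \<Rightarrow> complex mat" where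
  "mat_fun n f A = (let UL = (SOME UL. spec_decomp n A UL) in
     fst UL * mat n n (\<lambda>(i,j). if i = j then complex_of_real (f (snd UL i)) else 0) * adj (fst UL))"

text \<open>Matrix logarithm on the support (note \<open>ln 0 = 0\<close> in Isabelle/HOL).\<close>
definition mat_log :: "nat \<Rightarrow> complex mat \<Rightarrow> complex mat" where
  "mat_log n A = mat_fun n ln A"

definition vn_entropy :: "nat \<Rightarrow> complex mat \<Rightarrow> real" where
  "vn_entropy n \<rho> = - Re (mtrace (\<rho> * mat_log n \<rho>))"

definition cond_entropy :: "nat \<Rightarrow> nat \<Rightarrow> complex mat \<Rightarrow> real" where
  "cond_entropy dX dY \<rho> = vn_entropy (dX*dY) \<rho> - vn_entropy dY (ptrace1 dX dY \<rho>)"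

definition rel_entropy :: "nat \<Rightarrow> complex mat \<Rightarrow> complex mat \<Rightarrow> ereal" where
  "rel_entropy n \<rho> \<sigma> =
     (if (\<forall>v \<in> carrier_vec n. \<sigma> *\<^sub>v v = 0\<^sub>v n \<longrightarrow> \<rho> *\<^sub>v v = 0\<^sub>v n)
      then ereal (Re (mtrace (\<rho> * (mat_log n \<rho> - mat_log n \<sigma>))))
      else \<infinity>)"

text \<open>Given \<open>\<rho>\<close> on \<open>R_A A'\<close> and \<open>\<omega>\<close> on \<open>R_B B'\<close>, reorder \<open>\<rho> \<otimes> \<omega>\<close> to
  \<open>R_A R_B A' B'\<close> and apply \<open>id_{R_A R_B} \<otimes> K\<close>; the output lives on \<open>R_A R_B A B\<close>
  (the ordering of output factors is irrelevant for the relative entropy).\<close>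
definition apply_bipartite ::
  "nat \<Rightarrow> nat \<Rightarrow> nat \<Rightarrow> nat \<Rightarrow> nat \<Rightarrow> nat \<Rightarrow> (complex mat \<Rightarrow> complex mat)
    \<Rightarrow> complex mat \<Rightarrow> complex mat \<Rightarrow> complex mat" where
  "apply_bipartite rA rB dA' dB' dA dB K \<rho> \<omega> =
     (let P = tensor_mat (tensor_mat (1\<^sub>m rA) (swap_mat dA' rB)) (1\<^sub>m dB')
      in id_tensor_map (rA*rB) (dA'*dB') (dA*dB) K (P * tensor_mat \<rho> \<omega> * adj P))"

definition bidir_div ::
  "nat \<Rightarrow> nat \<Rightarrow> nat \<Rightarrow> nat \<Rightarrow> (complex mat \<Rightarrow> complex mat) \<Rightarrow> (complex mat \<Rightarrow> complex mat) \<Rightarrow> ereal" where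
  "bidir_div dA' dB' dA dB K L =
     (SUP (rA, rB, \<rho>, \<omega>) \<in> {(rA, rB, \<rho>, \<omega>). density_mat (rA*dA') \<rho> \<and> density_mat (rB*dB') \<omega>}.
        rel_entropy (rA*rB*(dA*dB))
          (apply_bipartite rA rB dA' dB' dA dB K \<rho> \<omega>)
          (apply_bipartite rA rB dA' dB' dA dB L \<rho> \<omega>))"

text \<open>\<open>(\<R>_{A'\<rightarrow>A} \<otimes> \<M>_{B'\<rightarrow>B})(X) = 1_A \<otimes> \<M>(tr_{A'} X)\<close>, with \<open>\<R>(Y) = tr(Y) 1_A\<close>.\<close>
definition replacer_tensor ::
  "nat \<Rightarrow> nat \<Rightarrow> nat \<Rightarrow> (complex mat \<Rightarrow> complex mat) \<Rightarrow> complex mat \<Rightarrow> complex mat" where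
  "replacer_tensor dA' dB' dA M X = tensor_mat (1\<^sub>m dA) (M (ptrace1 dA' dB' X))"

definition bidir_cond_entropy ::
  "nat \<Rightarrow> nat \<Rightarrow> nat \<Rightarrow> nat \<Rightarrow> (complex mat \<Rightarrow> complex mat) \<Rightarrow> ereal" where
  "bidir_cond_entropy dA' dB' dA dB N =
     - (INF M \<in> {M. quantum_channel dB' dB M}. bidir_div dA' dB' dA dB N (replacer_tensor dA' dB' dA M))"

text \<open>Choi state \<open>\<Phi>^N_{R_A A R_B B} = N(\<Phi>_{R_A A'} \<otimes> \<Phi>_{R_B B'})\<close>: apply \<open>id \<otimes> N\<close> to
  \<open>\<Phi>_{R_A A'} \<otimes> \<Phi>_{R_B B'}\<close> (via \<open>apply_bipartite\<close>, output on \<open>R_A R_B A B\<close>) and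
  reorder the output factors to \<open>R_A A R_B B\<close>.\<close>
definition choi_state :: "nat \<Rightarrow> nat \<Rightarrow> nat \<Rightarrow> nat \<Rightarrow> (complex mat \<Rightarrow> complex mat) \<Rightarrow> complex mat" where
  "choi_state dA' dB' dA dB N =
     (let Q = tensor_mat (tensor_mat (1\<^sub>m dA') (swap_mat dB' dA)) (1\<^sub>m dB)
      in Q * apply_bipartite dA' dB' dA' dB' dA dB N (max_ent dA') (max_ent dB') * adj Q)"

end

theory Submission
  imports Defs "Jordan_Normal_Form.Char_Poly"
begin

text \<open>Taking maximally entangled states on \<open>R\<^sub>A A'\<close> and \<open>R\<^sub>B B'\<close> as inputs in the supremum defining
  \<open>D\<^sup>\<leftrightarrow>\<close> shows, after permuting tensor factors, that for every channel \<open>\<M>\<close>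
  \<open>D\<^sup>\<leftrightarrow>[\<N> \<parallel> \<R> \<otimes> \<M>] \<ge> D(\<Phi>\<^sup>\<N> \<parallel> 1 / |A'| \<otimes> \<sigma>\<^sub>M)\<close>, where \<open>\<sigma>\<^sub>M\<close> is the Choi state of \<open>\<M>\<close>.
  For states \<open>\<rho>\<close> on \<open>K L\<close> and \<open>\<sigma>\<close> on \<open>L\<close> and \<open>c > 0\<close>,
  \<open>D(\<rho> \<parallel> c 1\<^sub>K \<otimes> \<sigma>) = - S(\<rho>) - ln c - tr \<rho>\<^sub>L log \<sigma> \<ge> - ln c - S(K|L)\<^sub>\<rho>\<close>
  by Klein's inequality \<open>- tr \<rho>\<^sub>L log \<sigma> \<ge> S(\<rho>\<^sub>L)\<close>. With \<open>c = 1 / |A'|\<close> and the infimum over \<open>\<M>\<close> this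
  gives the bound.\<close>

declare index_mult_mat(1)[simp del]

lemma index_mult_mat_sum:
  assumes "A \<in> carrier_mat n k" "B \<in> carrier_mat k m" "i < n" "j < m"
  shows "(A * B) $$ (i,j) = (\<Sum>l<k. A $$ (i,l) * B $$ (l,j))"
  using assms by (simp add: index_mult_mat(1) scalar_prod_def atLeast0LessThan)

lemma index_mult_mat_vec_sum:
  assumes "A \<in> carrier_mat n k" "v \<in> carrier_vec k" "i < n"
  shows "(A *\<^sub>v v) $ i = (\<Sum>l<k. A $$ (i,l) * v $ l)"
  using assms by (auto simp add: scalar_prod_def atLeast0LessThan)

lemma adj_carrier: "A \<in> carrier_mat n m \<Longrightarrow> adj A \<in> carrier_mat m n"
  by (auto simp: adj_def)

lemma adj_dim[simp]: "dim_row (adj A) = dim_col A" "dim_col (adj A) = dim_row A"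
  by (auto simp: adj_def)

lemma adj_index[simp]: "i < dim_col A \<Longrightarrow> j < dim_row A \<Longrightarrow> adj A $$ (i,j) = cnj (A $$ (j,i))"
  by (auto simp: adj_def)

lemma adj_adj[simp]: "adj (adj A) = A"
  by (rule eq_matI, auto)

lemma adj_one[simp]: "adj (1\<^sub>m n) = 1\<^sub>m n"
  by (rule eq_matI, auto)

lemma adj_mult:
  assumes "A \<in> carrier_mat n k" "B \<in> carrier_mat k m"
  shows "adj (A * B) = adj B * adj A"
proof (rule eq_matI)
  fix i j assume "i < dim_row (adj B * adj A)" "j < dim_col (adj B * adj A)"
  hence ij: "i < m" "j < n" using assms by auto
  have "adj (A * B) $$ (i,j) = cnj ((A*B) $$ (j,i))" using ij assms by simp
  also have "\<dots> = (\<Sum>l<k. cnj (A $$ (j,l)) * cnj (B $$ (l,i)))"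
    using ij assms by (simp add: index_mult_mat_sum)
  also have "\<dots> = (adj B * adj A) $$ (i,j)"
    using ij assms by (subst index_mult_mat_sum[of _ m k _ n], auto simp: mult.commute intro: sum.cong)
  finally show "adj (A * B) $$ (i,j) = (adj B * adj A) $$ (i,j)" .
qed (use assms in auto)

lemma unitaryD:
  assumes "unitary_mat n U"
  shows "U \<in> carrier_mat n n" "U * adj U = 1\<^sub>m n" "adj U * U = 1\<^sub>m n"
  using assms by (auto simp: unitary_mat_def)

lemma unitary_adj: "unitary_mat n U \<Longrightarrow> unitary_mat n (adj U)"
  by (auto simp: unitary_mat_def)

lemma unitary_mult:
  assumes U: "unitary_mat n U" and V: "unitary_mat n V"
  shows "unitary_mat n (U * V)"
proof -
  have c: "U \<in> carrier_mat n n" "V \<in> carrier_mat n n" using U V by (auto simp: unitary_mat_def)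
  have a: "adj (U * V) = adj V * adj U" using adj_mult c by blast
  have ca: "adj U \<in> carrier_mat n n" "adj V \<in> carrier_mat n n" using c by (auto intro: adj_carrier)
  have cb: "adj V * adj U \<in> carrier_mat n n" "V * adj V \<in> carrier_mat n n" "U * V \<in> carrier_mat n n"
    "adj U * U \<in> carrier_mat n n"
    using c ca by auto
  have "U * V * adj (U * V) = U * ((V * adj V) * adj U)"
    unfolding a using c ca cb by (simp only: assoc_mult_mat)
  also have "\<dots> = 1\<^sub>m n" using U V c by (simp add: unitary_mat_def)
  finally have 1: "U * V * adj (U * V) = 1\<^sub>m n" .
  have "adj (U * V) * (U * V) = adj V * ((adj U * U) * V)"
    unfolding a using c ca cb by (simp only: assoc_mult_mat)
  also have "\<dots> = 1\<^sub>m n" using U V c by (simp add: unitary_mat_def)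
  finally show ?thesis using 1 c by (auto simp: unitary_mat_def)
qed

lemma unitary_one: "unitary_mat n (1\<^sub>m n)" by (simp add: unitary_mat_def)

lemma index_mult_adj:
  assumes "B \<in> carrier_mat n n" "i < n" "j < n"
  shows "(B * adj B) $$ (i,j) = (\<Sum>k<n. B $$ (i,k) * cnj (B $$ (j,k)))"
  using assms by (subst index_mult_mat_sum[of _ n n _ n], auto)

lemma index_adj_mult:
  assumes "B \<in> carrier_mat n n" "i < n" "j < n"
  shows "(adj B * B) $$ (i,j) = (\<Sum>k<n. cnj (B $$ (k,i)) * B $$ (k,j))"
  using assms by (subst index_mult_mat_sum[of _ n n _ n], auto)

lemma index_adj_mult_mult:
  assumes B: "B \<in> carrier_mat n n" and R: "R \<in> carrier_mat n n" and k: "k < n" "k' < n"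
  shows "(adj B * R * B) $$ (k,k') = (\<Sum>i<n. \<Sum>j<n. cnj (B $$ (i,k)) * R $$ (i,j) * B $$ (j,k'))"
proof -
  have aB: "adj B \<in> carrier_mat n n" using B adj_carrier by blast
  have "(adj B * R * B) $$ (k,k') = (\<Sum>j<n. (adj B * R) $$ (k,j) * B $$ (j,k'))"
    using index_mult_mat_sum[of "adj B * R" n n B n] aB R B k by auto
  also have "\<dots> = (\<Sum>j<n. (\<Sum>i<n. cnj (B $$ (i,k)) * R $$ (i,j)) * B $$ (j,k'))"
    using index_mult_mat_sum[OF aB R] k B by (intro sum.cong refl) auto
  also have "\<dots> = (\<Sum>i<n. \<Sum>j<n. cnj (B $$ (i,k)) * R $$ (i,j) * B $$ (j,k'))"
    by (subst sum.swap, simp add: sum_distrib_right)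
  finally show ?thesis .
qed

definition diag_real :: "nat \<Rightarrow> (nat \<Rightarrow> real) \<Rightarrow> complex mat" where
  "diag_real n l = mat n n (\<lambda>(i,j). if i = j then complex_of_real (l i) else 0)"

lemma diag_real_carrier[simp]: "diag_real n l \<in> carrier_mat n n" by (simp add: diag_real_def)

lemma diag_real_dim[simp]: "dim_row (diag_real n l) = n" "dim_col (diag_real n l) = n" by (auto simp: diag_real_def)

lemma diag_real_index[simp]: "i < n \<Longrightarrow> j < n \<Longrightarrow> diag_real n l $$ (i,j) = (if i = j then complex_of_real (l i) else 0)"
  by (simp add: diag_real_def)

lemma adj_diag_real[simp]: "adj (diag_real n l) = diag_real n l"
  by (rule eq_matI, auto)

lemma spec_decomp_iff: "spec_decomp n A (U,l) \<longleftrightarrow> unitary_mat n U \<and> A = U * diag_real n l * adj U"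
  unfolding spec_decomp_def diag_real_def fst_conv snd_conv ..

lemma diag_real_mult_index:
  assumes W: "W \<in> carrier_mat n n" and ij: "i < n" "j < n"
  shows "(diag_real n m * W) $$ (i,j) = complex_of_real (m i) * W $$ (i,j)"
proof -
  have "(diag_real n m * W) $$ (i,j) = (\<Sum>k<n. diag_real n m $$ (i,k) * W $$ (k,j))"
    using index_mult_mat_sum[OF diag_real_carrier W ij] .
  also have "\<dots> = (\<Sum>k<n. if k = i then complex_of_real (m i) * W $$ (i,j) else 0)"
    using ij by (intro sum.cong refl) auto
  also have "\<dots> = complex_of_real (m i) * W $$ (i,j)" using ij by simp
  finally show ?thesis .
qed

lemma mult_diag_real_index:
  assumes W: "W \<in> carrier_mat n n" and ij: "i < n" "j < n"
  shows "(W * diag_real n m) $$ (i,j) = W $$ (i,j) * complex_of_real (m j)"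
proof -
  have "(W * diag_real n m) $$ (i,j) = (\<Sum>k<n. W $$ (i,k) * diag_real n m $$ (k,j))"
    using index_mult_mat_sum[OF W diag_real_carrier ij] .
  also have "\<dots> = (\<Sum>k<n. if k = j then W $$ (i,j) * complex_of_real (m j) else 0)"
    using ij by (intro sum.cong refl) auto
  also have "\<dots> = W $$ (i,j) * complex_of_real (m j)" using ij by simp
  finally show ?thesis .
qed

lemma index_conj_diag_real:
  assumes "B \<in> carrier_mat n n" "i < n" "j < n"
  shows "(B * diag_real n l * adj B) $$ (i,j) = (\<Sum>k<n. B $$ (i,k) * complex_of_real (l k) * cnj (B $$ (j,k)))"
proof -
  have "(B * diag_real n l * adj B) $$ (i,j) = (\<Sum>k<n. (B * diag_real n l) $$ (i,k) * adj B $$ (k,j))"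
    using assms by (subst index_mult_mat_sum[of _ n n _ n], auto)
  also have "\<dots> = (\<Sum>k<n. (\<Sum>m<n. B $$ (i,m) * diag_real n l $$ (m,k)) * cnj (B $$ (j,k)))"
    using assms by (intro sum.cong refl, subst index_mult_mat_sum[of _ n n _ n], auto)
  also have "\<dots> = (\<Sum>k<n. B $$ (i,k) * complex_of_real (l k) * cnj (B $$ (j,k)))"
    using assms by (intro sum.cong refl, simp add: if_distrib cong: if_cong)
  finally show ?thesis .
qed

lemma mtrace_eq_sum: "A \<in> carrier_mat n n \<Longrightarrow> mtrace A = (\<Sum>i<n. A $$ (i,i))"
  by (simp add: mtrace_def)

lemma mtrace_comm:
  assumes "A \<in> carrier_mat n m" "B \<in> carrier_mat m n"
  shows "mtrace (A * B) = mtrace (B * A)"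
proof -
  have "mtrace (A * B) = (\<Sum>i<n. \<Sum>l<m. A $$ (i,l) * B $$ (l,i))"
    using assms by (simp add: mtrace_def index_mult_mat_sum)
  also have "\<dots> = (\<Sum>l<m. \<Sum>i<n. B $$ (l,i) * A $$ (i,l))"
    by (subst sum.swap, simp add: mult.commute)
  also have "\<dots> = mtrace (B * A)"
    using assms by (simp add: mtrace_def index_mult_mat_sum)
  finally show ?thesis .
qed

lemma mtrace_minus: "A \<in> carrier_mat n n \<Longrightarrow> B \<in> carrier_mat n n \<Longrightarrow> mtrace (A - B) = mtrace A - mtrace B"
  by (auto simp add: mtrace_def sum_subtractf[symmetric] intro!: sum.cong)

lemma mtrace_mult_conj_diag_real:
  assumes B: "B \<in> carrier_mat n n" and R: "R \<in> carrier_mat n n"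
  shows "mtrace (R * (B * diag_real n d * adj B)) = (\<Sum>k<n. complex_of_real (d k) * (adj B * R * B) $$ (k,k))"
proof -
  have X: "B * diag_real n d * adj B \<in> carrier_mat n n" using B by (auto intro: adj_carrier)
  have "mtrace (R * (B * diag_real n d * adj B)) = (\<Sum>i<n. \<Sum>j<n. R $$ (i,j) * (B * diag_real n d * adj B) $$ (j,i))"
    using R X by (simp add: mtrace_def index_mult_mat_sum)
  also have "\<dots> = (\<Sum>i<n. \<Sum>j<n. \<Sum>k<n. R $$ (i,j) * (B $$ (j,k) * complex_of_real (d k) * cnj (B $$ (i,k))))"
    using index_conj_diag_real[OF B] by (simp add: sum_distrib_left)
  also have "\<dots> = (\<Sum>k<n. \<Sum>i<n. \<Sum>j<n. complex_of_real (d k) * (cnj (B $$ (i,k)) * R $$ (i,j) * B $$ (j,k)))"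
    by (subst sum.swap, subst (2) sum.swap, simp add: ac_simps)
  also have "\<dots> = (\<Sum>k<n. complex_of_real (d k) * (adj B * R * B) $$ (k,k))"
    using index_adj_mult_mult[OF B R] by (simp add: sum_distrib_left)
  finally show ?thesis .
qed

lemma sum_lessThan_mult:
  fixes f :: "nat \<Rightarrow> 'a::comm_monoid_add"
  shows "(\<Sum>i<m*n. f i) = (\<Sum>p<m. \<Sum>q<n. f (p*n+q))"
proof -
  have "(\<Sum>i<m*n. f i) = (\<Sum>p<m. sum f {p*n..<p*n+n})"
    using sum.nat_group[of f n m] by simp
  also have "\<dots> = (\<Sum>p<m. \<Sum>q<n. f (p*n+q))"
  proof -
    have "sum f {p*n..<p*n+n} = (\<Sum>q<n. f (p*n+q))" for p
    proof -
    have "sum f {p*n..<p*n+n} = sum (\<lambda>q. f (q + p*n)) {0..<n}"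
      using sum.shift_bounds_nat_ivl[of f 0 "p*n" n] by (simp add: add.commute)
    thus "sum f {p*n..<p*n+n} = (\<Sum>q<n. f (p*n+q))"
      by (simp add: atLeast0LessThan add.commute)
    qed
    thus ?thesis by simp
  qed
  finally show ?thesis .
qed

lemma index_pair_split: "(i::nat) < m * n \<Longrightarrow> i div n < m \<and> i mod n < n \<and> i = (i div n) * n + i mod n"
proof -
  assume a: "i < m * n"
  hence "n > 0" by (cases n, auto)
  thus ?thesis using a less_mult_imp_div_less[of i m n] div_mult_mod_eq[of i n] by auto
qed

lemma index_pair_less: "(p::nat) < m \<Longrightarrow> q < n \<Longrightarrow> p * n + q < m * n"
proof -
  assume "p < m" "q < n"
  hence "p * n + q < p * n + n" by simp
  also have "\<dots> = Suc p * n" by simp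
  also have "\<dots> \<le> m * n" using \<open>p < m\<close> by (intro mult_le_mono1, simp)
  finally show ?thesis .
qed

lemma index_pair_eq_iff:
  assumes "(q::nat) < n" "q' < n"
  shows "(p * n + q = p' * n + q') = (p = p' \<and> q = q')"
proof
  assume e: "p * n + q = p' * n + q'"
  have "p = (p * n + q) div n" "q = (p * n + q) mod n" using assms by simp_all
  moreover have "p' = (p' * n + q') div n" "q' = (p' * n + q') mod n" using assms by simp_all
  ultimately show "p = p' \<and> q = q'" using e by metis
qed simp

section \<open>The spectral theorem for Hermitian matrices\<close>

lemma hermitian_index:
  assumes "hermitian_mat n A" "i < n" "j < n"
  shows "A $$ (i,j) = cnj (A $$ (j,i))"
proof -
  have c: "A \<in> carrier_mat n n" "adj A = A" using assms by (auto simp: hermitian_mat_def)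
  have "adj A $$ (i,j) = cnj (A $$ (j,i))" using c assms by (intro adj_index) auto
  with c(2) show ?thesis by simp
qed

lemma hermitian_conj:
  assumes "hermitian_mat n A" "B \<in> carrier_mat m n"
  shows "hermitian_mat m (B * A * adj B)"
proof -
  have c: "A \<in> carrier_mat n n" "adj A = A" using assms by (auto simp: hermitian_mat_def)
  have cB: "adj B \<in> carrier_mat n m" using assms adj_carrier by blast
  have "adj (B * A * adj B) = adj (adj B) * adj (B * A)"
    using adj_mult[of "B * A" m n "adj B" m] c assms cB by auto
  also have "\<dots> = B * (adj A * adj B)" using adj_mult[of B m n A n] c assms by simp
  also have "\<dots> = B * A * adj B" using c assms cB by simp
  finally show ?thesis using c assms cB by (auto simp: hermitian_mat_def)
qed

lemma conj_mult_conj: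
  assumes B: "B \<in> carrier_mat n n" and C: "C \<in> carrier_mat n n" and D: "D \<in> carrier_mat n n"
  shows "(B * C) * D * adj (B * C) = B * (C * D * adj C) * adj B"
proof -
  have aB: "adj B \<in> carrier_mat n n" and aC: "adj C \<in> carrier_mat n n" using B C adj_carrier by auto
  have CD: "C * D \<in> carrier_mat n n" "C * D * adj C \<in> carrier_mat n n" "adj C * adj B \<in> carrier_mat n n"
    using C D aC aB by auto
  have "(B * C) * D * adj (B * C) = (B * C) * D * (adj C * adj B)" using adj_mult[OF B C] by simp
  also have "\<dots> = B * (C * D) * (adj C * adj B)" using assoc_mult_mat[OF B C D] by simp
  also have "\<dots> = B * ((C * D) * (adj C * adj B))" using assoc_mult_mat[OF B CD(1) CD(3)] by simp
  also have "(C * D) * (adj C * adj B) = (C * D * adj C) * adj B" using assoc_mult_mat[OF CD(1) aC aB] by simp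
  also have "B * (C * D * adj C * adj B) = B * (C * D * adj C) * adj B" using assoc_mult_mat[OF B CD(2) aB] by simp
  finally show ?thesis .
qed

lemma unitary_conj_adj_conj:
  assumes H: "unitary_mat n H" and A: "A \<in> carrier_mat n n"
  shows "H * (adj H * A * H) * adj H = A"
proof -
  have Hc: "H \<in> carrier_mat n n" and aH: "adj H \<in> carrier_mat n n" using H by (auto simp: unitary_mat_def intro: adj_carrier)
  have X: "adj H * A \<in> carrier_mat n n" using aH A by auto
  have "H * (adj H * A) = (H * adj H) * A" using assoc_mult_mat[OF Hc aH A] by simp
  also have "\<dots> = A" using H A by (simp add: unitary_mat_def)
  finally have 1: "H * (adj H * A) = A" .
  have "H * (adj H * A * H) = H * (adj H * A) * H" using assoc_mult_mat[OF Hc X Hc] by simp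
  also have "\<dots> = A * H" using 1 by simp
  finally have "H * (adj H * A * H) * adj H = A * H * adj H" by simp
  also have "\<dots> = A * (H * adj H)" using assoc_mult_mat[OF A Hc aH] by simp
  also have "\<dots> = A" using H A by (simp add: unitary_mat_def)
  finally show ?thesis .
qed

lemma unitary_adj_conj_conj:
  assumes H: "unitary_mat n H" and A: "A \<in> carrier_mat n n"
  shows "adj H * (H * A * adj H) * H = A"
  using unitary_conj_adj_conj[OF unitary_adj[OF H] A] by simp

lemma eigenvector_exists:
  fixes A :: "complex mat"
  assumes A: "A \<in> carrier_mat n n" and n: "n > 0"
  shows "\<exists>e v. v \<in> carrier_vec n \<and> v \<noteq> 0\<^sub>v n \<and> A *\<^sub>v v = e \<cdot>\<^sub>v v"
proof -
  obtain as where cp: "char_poly A = (\<Prod>a\<leftarrow>as. [:-a,1:])" "length as = n"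
    using char_poly_factorized[OF A] by blast
  then obtain e where e: "e \<in> set as" using n by (cases as) auto
  have "poly (char_poly A) e = 0"
    unfolding cp(1) using e by (simp add: poly_prod_list prod_list_zero_iff)
  hence "eigenvalue A e" using eigenvalue_root_char_poly[OF A] by simp
  then obtain v where "eigenvector A v e" by (auto simp: eigenvalue_def)
  thus ?thesis using A by (auto simp: eigenvector_def)
qed

lemma cnj_mult_self_cmod: "cnj z * z = complex_of_real (cmod z) * complex_of_real (cmod z)"
  using complex_norm_square[of z] by (simp add: power2_eq_square mult.commute)

lemma mult_cnj_self_cmod: "z * cnj z = complex_of_real ((cmod z)^2)"
  using complex_norm_square[of z] by simp

lemma unit_rescaling_exists:
  assumes v: "v \<in> carrier_vec n" "v \<noteq> 0\<^sub>v n"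
  shows "\<exists>a. (\<Sum>i<n. (a * v $ i) * cnj (a * v $ i)) = 1 \<and> Im (a * v $ 0) = 0"
proof -
  obtain j where j: "j < n" "v $ j \<noteq> 0"
    using v by (metis eq_vecI carrier_vecD index_zero_vec)
  define s where "s = (\<Sum>i<n. (cmod (v $ i))^2)"
  have s_pos: "s > 0"
  proof -
    have "(cmod (v $ j))^2 > 0" using j by simp
    moreover have "(cmod (v $ j))^2 \<le> s" unfolding s_def
      by (rule member_le_sum, insert j, auto)
    ultimately show ?thesis by linarith
  qed
  define ph where "ph = (if v $ 0 = 0 then 1 else cnj (v $ 0) / complex_of_real (cmod (v $ 0)))"
  define a where "a = complex_of_real (1 / sqrt s) * ph"
  have ph_norm: "ph * cnj ph = 1"
  proof (cases "v $ 0 = 0")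
    case False
    hence "cmod (v $ 0) \<noteq> 0" by simp
    have "ph * cnj ph = (cnj (v $ 0) * v $ 0) / (complex_of_real (cmod (v $ 0)) * complex_of_real (cmod (v $ 0)))"
      using False unfolding ph_def by simp
    also have "\<dots> = 1" unfolding cnj_mult_self_cmod using \<open>cmod (v $ 0) \<noteq> 0\<close> by simp
    finally show ?thesis .
  qed (simp add: ph_def)
  have "(\<Sum>i<n. (a * v $ i) * cnj (a * v $ i)) = (\<Sum>i<n. complex_of_real (1 / s) * (v $ i * cnj (v $ i)))"
  proof (intro sum.cong refl)
    fix i
    have "(a * v $ i) * cnj (a * v $ i) = complex_of_real (1 / sqrt s) * complex_of_real (1 / sqrt s) * (ph * cnj ph) * (v $ i * cnj (v $ i))"
      unfolding a_def by (simp add: ac_simps)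
    also have "\<dots> = complex_of_real (1 / s) * (v $ i * cnj (v $ i))"
      using s_pos ph_norm by (simp add: of_real_mult[symmetric] real_sqrt_mult[symmetric] del: of_real_mult)
    finally show "(a * v $ i) * cnj (a * v $ i) = complex_of_real (1 / s) * (v $ i * cnj (v $ i))" .
  qed
  also have "\<dots> = complex_of_real (1 / s) * complex_of_real s"
    unfolding s_def sum_distrib_left[symmetric] mult_cnj_self_cmod of_real_sum ..
  also have "\<dots> = 1" using s_pos by (simp add: of_real_mult[symmetric] del: of_real_mult)
  finally have 1: "(\<Sum>i<n. (a * v $ i) * cnj (a * v $ i)) = 1" .
  have 2: "Im (a * v $ 0) = 0"
  proof (cases "v $ 0 = 0")
    case True thus ?thesis by simp
  next
    case False
    have "ph * v $ 0 = (cnj (v $ 0) * v $ 0) / complex_of_real (cmod (v $ 0))"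
      using False unfolding ph_def by simp
    also have "\<dots> = complex_of_real (cmod (v $ 0))" unfolding cnj_mult_self_cmod using False by simp
    finally have "ph * v $ 0 = complex_of_real (cmod (v $ 0))" .
    thus ?thesis unfolding a_def by (simp add: mult.assoc)
  qed
  show ?thesis using 1 2 by blast
qed

lemma unit_eigenvector_exists:
  fixes A :: "complex mat"
  assumes A: "A \<in> carrier_mat n n" and n: "n > 0"
  shows "\<exists>e u. (\<Sum>i<n. u i * cnj (u i)) = 1 \<and> Im (u 0) = 0 \<and>
     (\<forall>i<n. (\<Sum>k<n. A $$ (i,k) * u k) = e * u i)"
proof -
  obtain e v where v: "v \<in> carrier_vec n" "v \<noteq> 0\<^sub>v n" "A *\<^sub>v v = e \<cdot>\<^sub>v v"
    using eigenvector_exists[OF A n] by blast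
  obtain a where a: "(\<Sum>i<n. (a * v $ i) * cnj (a * v $ i)) = 1" "Im (a * v $ 0) = 0"
    using unit_rescaling_exists[OF v(1,2)] by blast
  have "(\<Sum>k<n. A $$ (i,k) * (a * v $ k)) = e * (a * v $ i)" if "i < n" for i
  proof -
    have "(A *\<^sub>v v) $ i = (e \<cdot>\<^sub>v v) $ i" using v by simp
    hence "(\<Sum>k<n. A $$ (i,k) * v $ k) = e * v $ i"
      using index_mult_mat_vec_sum[OF A v(1) that] v that by simp
    moreover have "(\<Sum>k<n. A $$ (i,k) * (a * v $ k)) = a * (\<Sum>k<n. A $$ (i,k) * v $ k)"
      by (simp add: sum_distrib_left ac_simps)
    ultimately show ?thesis by simp
  qed
  thus ?thesis using a by (intro exI[of _ e] exI[of _ "\<lambda>i. a * v $ i"]) auto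
qed

text \<open>For \<open>w = 0\<close> this is the identity, since \<open>2 / 0 = 0\<close>.\<close>
definition householder :: "nat \<Rightarrow> (nat \<Rightarrow> complex) \<Rightarrow> complex mat" where
  "householder n w = mat n n (\<lambda>(i,j). (if i = j then 1 else 0) - 2 / (\<Sum>k<n. w k * cnj (w k)) * w i * cnj (w j))"

lemma unitary_householder: "unitary_mat n (householder n w)"
proof -
  define N where "N = (\<Sum>k<n. w k * cnj (w k))"
  define c where "c = 2 / N"
  define H where "H = householder n w"
  have H_eq: "H = mat n n (\<lambda>(i,j). (if i = j then 1 else 0) - c * w i * cnj (w j))"
    unfolding H_def householder_def c_def N_def ..
  have cN: "cnj N = N" unfolding N_def by (simp add: mult.commute)
  have cc: "cnj c = c" unfolding c_def using cN by simp
  have c2: "c * c * N = 2 * c" unfolding c_def by (cases "N = 0", auto simp: field_simps)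
  have H: "H \<in> carrier_mat n n" unfolding H_eq by simp
  have adjH: "adj H = H"
    by (rule eq_matI, insert cc, auto simp: H_eq)
  have HH: "H * H = 1\<^sub>m n"
  proof (rule eq_matI)
    fix i j assume "i < dim_row (1\<^sub>m n)" "j < dim_col (1\<^sub>m n)"
    hence ij: "i < n" "j < n" by auto
    have "(H * H) $$ (i,j) = (\<Sum>k<n. ((if i = k then 1 else 0) - c * w i * cnj (w k)) *
                                      ((if k = j then 1 else 0) - c * w k * cnj (w j)))"
      using ij H by (subst index_mult_mat_sum[of _ n n _ n], auto simp: H_eq)
    also have "\<dots> = (\<Sum>k<n. (if i = k then (if k = j then 1 else 0) else 0)
        - (if i = k then c * w k * cnj (w j) else 0) - (if k = j then c * w i * cnj (w k) else 0)
        + (c * c * w i * cnj (w j)) * (w k * cnj (w k)))"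
      by (intro sum.cong refl, auto simp: algebra_simps)
    also have "\<dots> = (if i = j then 1 else 0) - c * w i * cnj (w j) - c * w i * cnj (w j)
        + c * c * w i * cnj (w j) * N"
      using ij unfolding N_def by (simp add: sum.distrib sum_subtractf sum_distrib_left[symmetric])
    also have "\<dots> = (if i = j then 1 else 0)"
      using c2 by (simp add: algebra_simps)
       (metis (no_types) mult.assoc mult.commute mult_2)
    finally show "(H * H) $$ (i,j) = 1\<^sub>m n $$ (i,j)" using ij by simp
  qed (use H in auto)
  show ?thesis using H HH adjH unfolding H_def by (simp add: unitary_mat_def)
qed

text \<open>This is where the phase normalisation \<open>Im (u 0) = 0\<close> is needed.\<close>
lemma householder_first_col:
  assumes un: "(\<Sum>i<n. u i * cnj (u i)) = 1" and im: "Im (u 0) = 0" and n: "n > 0" and i: "i < n"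
  shows "householder n (\<lambda>i. (if i = 0 then 1 else 0) - u i) $$ (i,0) = u i"
proof -
  define w where "w = (\<lambda>i. (if i = 0 then 1 else 0) - u i)"
  define N where "N = (\<Sum>k<n. w k * cnj (w k))"
  define c where "c = 2 / N"
  define H where "H = mat n n (\<lambda>(i,j). (if i = j then 1 else 0) - c * w i * cnj (w j))"
  have H_eq: "householder n w = H"
    unfolding H_def householder_def c_def N_def ..
  have u0: "cnj (u 0) = u 0" using im by (simp add: complex_eq_iff)
  have N_eq: "N = 2 - 2 * u 0"
  proof -
    have "N = (\<Sum>k<n. (if k = 0 then 1 else 0) - (if k = 0 then cnj (u k) else 0)
                 - (if k = 0 then u k else 0) + u k * cnj (u k))"
      unfolding N_def w_def by (intro sum.cong refl, simp add: algebra_simps)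
    also have "\<dots> = 1 - cnj (u 0) - u 0 + 1"
      using n by (simp add: sum.distrib sum_subtractf un)
    finally show ?thesis using u0 by simp
  qed
  have "H $$ (i,0) = u i"
  proof (cases "N = 0")
    case True
    have "Re N = (\<Sum>k<n. (cmod (w k))^2)" unfolding N_def Re_sum mult_cnj_self_cmod by simp
    hence "(\<Sum>k<n. (cmod (w k))^2) = 0" using True by simp
    hence "(cmod (w i))^2 = 0" using i by (subst (asm) sum_nonneg_eq_0_iff, auto)
    hence "w i = 0" by simp
    thus ?thesis using i unfolding H_def c_def True by (simp add: w_def split: if_splits)
  next
    case False
    have "c * cnj (w 0) = 1"
      using False u0 unfolding c_def w_def N_eq by (simp add: field_simps)
    hence cw: "c * w i * cnj (w 0) = w i" by (metis mult.commute mult.left_commute mult.right_neutral)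
    have "H $$ (i,0) = (if i = 0 then 1 else 0) - c * w i * cnj (w 0)"
      unfolding H_def using i n by simp
    also have "\<dots> = (if i = 0 then 1 else 0) - w i" unfolding cw ..
    also have "\<dots> = u i" by (simp add: w_def)
    finally show ?thesis .
  qed
  thus ?thesis unfolding w_def[symmetric] H_eq .
qed

lemma unitary_with_first_col:
  assumes "(\<Sum>i<n. u i * cnj (u i)) = 1" "Im (u 0) = 0" "n > 0"
  shows "\<exists>H. unitary_mat n H \<and> (\<forall>i<n. H $$ (i,0) = u i)"
  using unitary_householder householder_first_col[OF assms] by blast

definition scalar_dsum :: "complex \<Rightarrow> complex mat \<Rightarrow> complex mat" where
  "scalar_dsum a A = mat (Suc (dim_row A)) (Suc (dim_col A))
     (\<lambda>(i,j). if i = 0 \<and> j = 0 then a else if i = 0 \<or> j = 0 then 0 else A $$ (i - 1, j - 1))"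

lemma scalar_dsum_carrier[simp]: "A \<in> carrier_mat n m \<Longrightarrow> scalar_dsum a A \<in> carrier_mat (Suc n) (Suc m)"
  by (simp add: scalar_dsum_def)

lemma scalar_dsum_mult:
  assumes A: "A \<in> carrier_mat n k" and B: "B \<in> carrier_mat k m"
  shows "scalar_dsum a A * scalar_dsum b B = scalar_dsum (a * b) (A * B)"
proof (rule eq_matI)
  fix i j assume "i < dim_row (scalar_dsum (a * b) (A * B))" "j < dim_col (scalar_dsum (a * b) (A * B))"
  hence ij: "i < Suc n" "j < Suc m" using A B by (simp_all add: scalar_dsum_def)
  have "(scalar_dsum a A * scalar_dsum b B) $$ (i,j)
      = (\<Sum>l<Suc k. scalar_dsum a A $$ (i,l) * scalar_dsum b B $$ (l,j))"
    using A B ij by (intro index_mult_mat_sum) auto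
  also have "\<dots> = scalar_dsum a A $$ (i,0) * scalar_dsum b B $$ (0,j)
      + (\<Sum>l<k. scalar_dsum a A $$ (i,Suc l) * scalar_dsum b B $$ (Suc l,j))"
    by (rule sum.lessThan_Suc_shift)
  also have "\<dots> = scalar_dsum (a * b) (A * B) $$ (i,j)"
    using ij A B by (cases i; cases j) (auto simp: scalar_dsum_def index_mult_mat_sum intro!: sum.cong)
  finally show "(scalar_dsum a A * scalar_dsum b B) $$ (i,j) = scalar_dsum (a * b) (A * B) $$ (i,j)" .
qed (use A B in \<open>simp_all add: scalar_dsum_def\<close>)

lemma adj_scalar_dsum: "adj (scalar_dsum a A) = scalar_dsum (cnj a) (adj A)"
  by (rule eq_matI) (auto simp: scalar_dsum_def)

lemma scalar_dsum_one: "scalar_dsum 1 (1\<^sub>m n) = 1\<^sub>m (Suc n)"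
  by (rule eq_matI) (auto simp: scalar_dsum_def)

lemma scalar_dsum_diag_real:
  "scalar_dsum (complex_of_real r) (diag_real n l) = diag_real (Suc n) (case_nat r l)"
  by (rule eq_matI) (auto simp: scalar_dsum_def diag_real_def split: nat.split)

lemma unitary_scalar_dsum:
  assumes U: "unitary_mat n U"
  shows "unitary_mat (Suc n) (scalar_dsum 1 U)"
  using unitaryD[OF U] adj_carrier[of U n n]
  by (simp add: unitary_mat_def adj_scalar_dsum scalar_dsum_mult[of _ n n _ n] scalar_dsum_one)

lemma scalar_dsum_conj:
  assumes "U \<in> carrier_mat n n" "D \<in> carrier_mat n n"
  shows "scalar_dsum 1 U * scalar_dsum a D * adj (scalar_dsum 1 U) = scalar_dsum a (U * D * adj U)"
  using assms adj_carrier[OF assms(1)] by (simp add: adj_scalar_dsum scalar_dsum_mult[of _ n n _ n])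

lemma hermitian_first_col_split:
  assumes hA: "hermitian_mat (Suc m) A" and col: "\<And>i. 0 < i \<Longrightarrow> i < Suc m \<Longrightarrow> A $$ (i,0) = 0"
  defines "A' \<equiv> mat m m (\<lambda>(i,j). A $$ (Suc i, Suc j))"
  shows "A = scalar_dsum (complex_of_real (Re (A $$ (0,0)))) A'" and "hermitian_mat m A'"
proof -
  have Ac: "A \<in> carrier_mat (Suc m) (Suc m)" using hA by (simp add: hermitian_mat_def)
  have "cnj (A $$ (0,0)) = A $$ (0,0)" by (metis hermitian_index[OF hA] zero_less_Suc)
  hence real: "complex_of_real (Re (A $$ (0,0))) = A $$ (0,0)" by (auto simp: complex_eq_iff)
  have row: "A $$ (0,j) = 0" if "0 < j" "j < Suc m" for j
    using hermitian_index[OF hA, of 0 j] col[OF that] that by simp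
  show "A = scalar_dsum (complex_of_real (Re (A $$ (0,0)))) A'"
    using Ac real row col by (intro eq_matI) (auto simp: scalar_dsum_def A'_def)
  have "adj A' = A'"
  proof (rule eq_matI)
    fix i j assume "i < dim_row A'" "j < dim_col A'"
    hence ij: "Suc i < Suc m" "Suc j < Suc m" by (simp_all add: A'_def)
    have "A $$ (Suc i, Suc j) = cnj (A $$ (Suc j, Suc i))" using hermitian_index[OF hA ij] .
    thus "adj A' $$ (i,j) = A' $$ (i,j)" using ij by (simp add: A'_def)
  qed (simp_all add: A'_def)
  thus "hermitian_mat m A'" by (simp add: hermitian_mat_def A'_def)
qed

text \<open>Induction on the dimension: conjugating by a unitary whose first column is a unit eigenvector
  splits off a \<open>1 \<times> 1\<close> block.\<close>
theorem spectral_theorem: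
  "hermitian_mat n A \<Longrightarrow> \<exists>U l. unitary_mat n U \<and> A = U * diag_real n l * adj U"
proof (induction n arbitrary: A)
  case 0
  hence A: "A \<in> carrier_mat 0 0" by (simp add: hermitian_mat_def)
  have "A = 1\<^sub>m 0 * diag_real 0 (\<lambda>_. 0) * adj (1\<^sub>m 0)" by (rule eq_matI) (use A in auto)
  thus ?case using unitary_one by blast
next
  case (Suc m A)
  have A: "A \<in> carrier_mat (Suc m) (Suc m)" and hA: "hermitian_mat (Suc m) A"
    using Suc.prems by (auto simp: hermitian_mat_def)
  obtain e u where u1: "(\<Sum>i<Suc m. u i * cnj (u i)) = 1" and u0: "Im (u 0) = 0"
    and ev: "\<forall>i<Suc m. (\<Sum>k<Suc m. A $$ (i,k) * u k) = e * u i"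
    using unit_eigenvector_exists[OF A] by auto
  obtain H where H: "unitary_mat (Suc m) H" and Hu: "\<forall>i<Suc m. H $$ (i,0) = u i"
    using unitary_with_first_col[OF u1 u0] by auto
  have Hc: "H \<in> carrier_mat (Suc m) (Suc m)" and aHc: "adj H \<in> carrier_mat (Suc m) (Suc m)"
    using unitaryD[OF H] by auto
  define A' where "A' = adj H * A * H"
  have hA': "hermitian_mat (Suc m) A'" unfolding A'_def using hermitian_conj[OF hA aHc] by simp
  have AH: "(A * H) $$ (k,0) = e * H $$ (k,0)" if "k < Suc m" for k
    using ev Hu that A Hc by (simp add: index_mult_mat_sum[OF A Hc])
  have col0: "A' $$ (i,0) = 0" if "0 < i" "i < Suc m" for i
  proof -
    have "A' $$ (i,0) = (\<Sum>k<Suc m. adj H $$ (i,k) * (A * H) $$ (k,0))"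
      unfolding A'_def assoc_mult_mat[OF aHc A Hc]
      using index_mult_mat_sum[OF aHc mult_carrier_mat[OF A Hc] that(2) zero_less_Suc] .
    also have "\<dots> = (\<Sum>k<Suc m. e * (cnj (H $$ (k,i)) * H $$ (k,0)))"
      using AH Hc that by (intro sum.cong) auto
    also have "\<dots> = e * (adj H * H) $$ (i,0)"
      using index_adj_mult[OF Hc that(2) zero_less_Suc] by (simp add: sum_distrib_left del: sum.lessThan_Suc)
    finally show ?thesis using unitaryD(3)[OF H] that by simp
  qed
  define A3 where "A3 = mat m m (\<lambda>(i,j). A' $$ (Suc i, Suc j))"
  define r where "r = Re (A' $$ (0,0))"
  have A'split: "A' = scalar_dsum (complex_of_real r) A3" and hA3: "hermitian_mat m A3"
    using hermitian_first_col_split[OF hA' col0] unfolding A3_def r_def by auto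
  obtain U3 l3 where U3: "unitary_mat m U3" and A3eq: "A3 = U3 * diag_real m l3 * adj U3"
    using Suc.IH[OF hA3] by blast
  define U1 where "U1 = scalar_dsum 1 U3"
  have U1: "unitary_mat (Suc m) U1" unfolding U1_def using unitary_scalar_dsum[OF U3] .
  have "A' = U1 * diag_real (Suc m) (case_nat r l3) * adj U1"
    unfolding A'split A3eq U1_def scalar_dsum_diag_real[symmetric]
    using scalar_dsum_conj[OF unitaryD(1)[OF U3] diag_real_carrier] by simp
  hence "A = (H * U1) * diag_real (Suc m) (case_nat r l3) * adj (H * U1)"
    using unitary_conj_adj_conj[OF H A] conj_mult_conj[OF Hc unitaryD(1)[OF U1] diag_real_carrier]
    unfolding A'_def by simp
  thus ?case using unitary_mult[OF H U1] by blast
qed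

section \<open>Functional calculus\<close>

lemma diag_real_intertwine_fun:
  assumes Wc: "W \<in> carrier_mat n n" and WD: "W * diag_real n l = diag_real n m * W"
  shows "diag_real n (f \<circ> m) * W = W * diag_real n (f \<circ> l)"
proof (rule eq_matI)
  fix i j assume "i < dim_row (W * diag_real n (f \<circ> l))" "j < dim_col (W * diag_real n (f \<circ> l))"
  hence ij: "i < n" "j < n" using Wc by auto
  have "(W * diag_real n l) $$ (i,j) = (diag_real n m * W) $$ (i,j)" using WD by simp
  hence e: "W $$ (i,j) * complex_of_real (l j) = complex_of_real (m i) * W $$ (i,j)"
    using diag_real_mult_index[OF Wc ij] mult_diag_real_index[OF Wc ij] by simp
  have "complex_of_real (f (m i)) * W $$ (i,j) = W $$ (i,j) * complex_of_real (f (l j))"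
  proof (cases "W $$ (i,j) = 0")
    case False
    hence "l j = m i" using e by (simp add: mult.commute)
    thus ?thesis by (simp add: mult.commute)
  qed simp
  thus "(diag_real n (f \<circ> m) * W) $$ (i,j) = (W * diag_real n (f \<circ> l)) $$ (i,j)"
    using diag_real_mult_index[OF Wc ij] mult_diag_real_index[OF Wc ij] by simp
qed (use Wc in auto)

lemma conj_diag_real_fun_cong:
  assumes U: "unitary_mat n U" and V: "unitary_mat n V"
    and eq: "U * diag_real n l * adj U = V * diag_real n m * adj V"
  shows "U * diag_real n (f \<circ> l) * adj U = V * diag_real n (f \<circ> m) * adj V"
proof -
  have Uc: "U \<in> carrier_mat n n" and aU: "adj U \<in> carrier_mat n n" and UU: "U * adj U = 1\<^sub>m n" "adj U * U = 1\<^sub>m n"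
    using U by (auto simp: unitary_mat_def intro: adj_carrier)
  have Vc: "V \<in> carrier_mat n n" and aV: "adj V \<in> carrier_mat n n" and VV: "V * adj V = 1\<^sub>m n" "adj V * V = 1\<^sub>m n"
    using V by (auto simp: unitary_mat_def intro: adj_carrier)
  define W where "W = adj V * U"
  have Wc: "W \<in> carrier_mat n n" unfolding W_def using aV Uc by auto
  let ?D = "diag_real n l" and ?E = "diag_real n m"
  have Dc: "?D \<in> carrier_mat n n" and Ec: "?E \<in> carrier_mat n n" by auto
  have M: "U * ?D * adj U \<in> carrier_mat n n" "U * ?D \<in> carrier_mat n n" "V * ?E \<in> carrier_mat n n"
    using mult_carrier_mat[OF mult_carrier_mat[OF Uc Dc] aU] mult_carrier_mat[OF Uc Dc] mult_carrier_mat[OF Vc Ec] by auto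
  have "W * ?D = adj V * (U * ?D * adj U) * U"
  proof -
    have "adj V * (U * ?D * adj U) * U = adj V * ((U * ?D * adj U) * U)"
      using assoc_mult_mat[OF aV M(1) Uc] .
    also have "(U * ?D * adj U) * U = (U * ?D) * (adj U * U)"
      using assoc_mult_mat[OF M(2) aU Uc] .
    also have "\<dots> = U * ?D" using UU Uc by simp
    finally show ?thesis unfolding W_def using assoc_mult_mat[OF aV Uc Dc] by simp
  qed
  also have "\<dots> = adj V * (V * ?E * adj V) * U" unfolding eq ..
  also have "\<dots> = ?E * W"
  proof -
    have "adj V * (V * ?E * adj V) = (adj V * (V * ?E)) * adj V"
      using assoc_mult_mat[OF aV M(3) aV] by simp
    also have "adj V * (V * ?E) = ?E" using assoc_mult_mat[OF aV Vc Ec] VV by simp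
    finally have "adj V * (V * ?E * adj V) * U = ?E * adj V * U" by simp
    thus ?thesis unfolding W_def using assoc_mult_mat[OF Ec aV Uc] by simp
  qed
  finally have WD: "W * ?D = ?E * W" .
  have key: "diag_real n (f \<circ> m) * W = W * diag_real n (f \<circ> l)"
    using diag_real_intertwine_fun[OF Wc WD] .
  have Fc: "diag_real n (f \<circ> m) \<in> carrier_mat n n" "diag_real n (f \<circ> l) \<in> carrier_mat n n" by auto
  have "V * diag_real n (f \<circ> m) * adj V = V * diag_real n (f \<circ> m) * (adj V * (U * adj U))"
    using UU aV Vc by simp
  also have "adj V * (U * adj U) = W * adj U" unfolding W_def using assoc_mult_mat[OF aV Uc aU] by simp
  also have "V * diag_real n (f \<circ> m) * (W * adj U) = V * (diag_real n (f \<circ> m) * W) * adj U"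
    using assoc_mult_mat[OF mult_carrier_mat[OF Vc Fc(1)] Wc aU] assoc_mult_mat[OF Vc Fc(1) Wc] by simp
  also have "\<dots> = V * (W * diag_real n (f \<circ> l)) * adj U" unfolding key ..
  also have "\<dots> = (V * W) * diag_real n (f \<circ> l) * adj U" using assoc_mult_mat[OF Vc Wc Fc(2)] by simp
  also have "V * W = U" unfolding W_def using assoc_mult_mat[OF Vc aV Uc] VV Uc by simp
  finally show ?thesis by (simp add: o_def)
qed

lemma spec_decomp_exists: "hermitian_mat n A \<Longrightarrow> \<exists>UL. spec_decomp n A UL"
  using spectral_theorem[of n A] spec_decomp_iff by blast

lemma mat_fun_eq:
  assumes "spec_decomp n A (U,l)"
  shows "mat_fun n f A = U * diag_real n (f \<circ> l) * adj U"
proof -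
  define UL where "UL = (SOME UL. spec_decomp n A UL)"
  have s: "spec_decomp n A UL" unfolding UL_def using assms by (rule someI)
  obtain U' l' where UL': "UL = (U',l')" by (cases UL)
  have s': "unitary_mat n U'" "A = U' * diag_real n l' * adj U'" using s unfolding UL' spec_decomp_iff by auto
  have s0: "unitary_mat n U" "A = U * diag_real n l * adj U" using assms unfolding spec_decomp_iff by auto
  have "mat_fun n f A = U' * diag_real n (f \<circ> l') * adj U'"
    unfolding mat_fun_def UL_def[symmetric] UL' Let_def fst_conv snd_conv diag_real_def o_def by (rule refl)
  also have "\<dots> = U * diag_real n (f \<circ> l) * adj U"
    using conj_diag_real_fun_cong[OF s'(1) s0(1), of l' l f] s'(2) s0(2) by simp
  finally show ?thesis .
qed

lemma spec_decomp_unitary_conj: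
  assumes "spec_decomp n A (U,l)" "unitary_mat n Q"
  shows "spec_decomp n (Q * A * adj Q) (Q * U, l)"
proof -
  have U: "unitary_mat n U" "A = U * diag_real n l * adj U" using assms(1) unfolding spec_decomp_iff by auto
  have Qc: "Q \<in> carrier_mat n n" and Uc: "U \<in> carrier_mat n n" using U assms by (auto simp: unitary_mat_def)
  have "Q * A * adj Q = (Q * U) * diag_real n l * adj (Q * U)"
    unfolding U(2) using conj_mult_conj[OF Qc Uc diag_real_carrier] by simp
  thus ?thesis unfolding spec_decomp_iff using unitary_mult[OF assms(2) U(1)] by simp
qed

lemma mat_fun_unitary_conj:
  assumes "hermitian_mat n A" "unitary_mat n Q"
  shows "mat_fun n f (Q * A * adj Q) = Q * mat_fun n f A * adj Q"
proof -
  obtain U l where s: "spec_decomp n A (U,l)" using spec_decomp_exists[OF assms(1)] by auto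
  have Qc: "Q \<in> carrier_mat n n" and Uc: "U \<in> carrier_mat n n" using s assms by (auto simp: unitary_mat_def spec_decomp_iff)
  have "mat_fun n f (Q * A * adj Q) = (Q * U) * diag_real n (f \<circ> l) * adj (Q * U)"
    using mat_fun_eq[OF spec_decomp_unitary_conj[OF s assms(2)]] .
  also have "\<dots> = Q * (U * diag_real n (f \<circ> l) * adj U) * adj Q" using conj_mult_conj[OF Qc Uc diag_real_carrier] .
  also have "\<dots> = Q * mat_fun n f A * adj Q" using mat_fun_eq[OF s] by simp
  finally show ?thesis .
qed

lemma mat_fun_carrier:
  assumes "hermitian_mat n A"
  shows "mat_fun n f A \<in> carrier_mat n n"
proof -
  obtain U l where s: "spec_decomp n A (U,l)" using spec_decomp_exists[OF assms(1)] by auto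
  hence "U \<in> carrier_mat n n" by (auto simp: unitary_mat_def spec_decomp_iff)
  thus ?thesis using mat_fun_eq[OF s] by (auto intro: adj_carrier)
qed

section \<open>Positive semidefinite matrices and partial traces\<close>

lemma qform_eq_sum_mult_vec:
  assumes A: "A \<in> carrier_mat n n" and v: "v \<in> carrier_vec n"
  shows "qform A v = (\<Sum>i<n. cnj (v $ i) * (A *\<^sub>v v) $ i)"
proof -
  have "qform A v = (\<Sum>i<n. cnj (v $ i) * (\<Sum>j<n. A $$ (i,j) * v $ j))"
    using v by (simp add: qform_def sum_distrib_left mult.assoc)
  also have "\<dots> = (\<Sum>i<n. cnj (v $ i) * (A *\<^sub>v v) $ i)"
    using index_mult_mat_vec_sum[OF A v] by simp
  finally show ?thesis .
qed

lemma qform_kernel: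
  assumes "R \<in> carrier_mat n n" "v \<in> carrier_vec n" "R *\<^sub>v v = 0\<^sub>v n"
  shows "qform R v = 0"
  using qform_eq_sum_mult_vec[OF assms(1,2)] assms(3) by simp

lemma qform_conj:
  assumes B: "B \<in> carrier_mat m n" and A: "A \<in> carrier_mat n n" and v: "v \<in> carrier_vec m"
  shows "qform (B * A * adj B) v = qform A (adj B *\<^sub>v v)"
proof -
  have aB: "adj B \<in> carrier_mat n m" using B adj_carrier by blast
  define u where "u = adj B *\<^sub>v v"
  have u: "u \<in> carrier_vec n" unfolding u_def using aB v by auto
  define y where "y = A *\<^sub>v u"
  have y: "y \<in> carrier_vec n" unfolding y_def using A u by auto
  have BAB: "B * A * adj B \<in> carrier_mat m m" using B A aB by auto
  have e: "(B * A * adj B) *\<^sub>v v = B *\<^sub>v y"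
    unfolding y_def u_def using assoc_mult_mat_vec[OF mult_carrier_mat[OF B A] aB v] assoc_mult_mat_vec[OF B A u[unfolded u_def]]
    by (simp only:)
  have "qform (B * A * adj B) v = (\<Sum>i<m. cnj (v $ i) * (B *\<^sub>v y) $ i)"
    using qform_eq_sum_mult_vec[OF BAB v] e by simp
  also have "\<dots> = (\<Sum>i<m. \<Sum>k<n. cnj (v $ i) * B $$ (i,k) * y $ k)"
    using index_mult_mat_vec_sum[OF B y] by (simp add: sum_distrib_left mult.assoc)
  also have "\<dots> = (\<Sum>k<n. cnj (u $ k) * y $ k)"
  proof -
    have "cnj (u $ k) = (\<Sum>i<m. cnj (v $ i) * B $$ (i,k))" if "k < n" for k
    proof -
      have "u $ k = (\<Sum>i<m. adj B $$ (k,i) * v $ i)" unfolding u_def using index_mult_mat_vec_sum[OF aB v that] .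
      thus ?thesis using that B by (simp add: mult.commute)
    qed
    thus ?thesis by (subst sum.swap) (simp add: sum_distrib_right)
  qed
  also have "\<dots> = qform A u" using qform_eq_sum_mult_vec[OF A u] y_def by simp
  finally show ?thesis unfolding u_def .
qed

lemma psd_conj:
  assumes A: "psd_mat n A" and B: "B \<in> carrier_mat m n"
  shows "psd_mat m (B * A * adj B)"
proof -
  have hA: "hermitian_mat n A" and Ac: "A \<in> carrier_mat n n" using A by (auto simp: psd_mat_def hermitian_mat_def)
  have aB: "adj B \<in> carrier_mat n m" using B adj_carrier by blast
  show ?thesis unfolding psd_mat_def
  proof (intro conjI ballI)
    show "hermitian_mat m (B * A * adj B)" using hermitian_conj[OF hA B] .
    fix v :: "complex vec" assume v: "v \<in> carrier_vec m"
    have u: "adj B *\<^sub>v v \<in> carrier_vec n" using aB v by auto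
    show "Im (qform (B * A * adj B) v) = 0" "0 \<le> Re (qform (B * A * adj B) v)"
      unfolding qform_conj[OF B Ac v] using A u by (auto simp: psd_mat_def)
  qed
qed

lemma psd_real_outer:
  fixes g :: "nat \<Rightarrow> real"
  shows "psd_mat n (mat n n (\<lambda>(i,j). complex_of_real (g i * g j)))"
  (is "psd_mat n ?M")
proof -
  have h: "hermitian_mat n ?M"
    unfolding hermitian_mat_def by (auto intro!: eq_matI simp: mult.commute)
  have q: "Im (qform ?M v) = 0 \<and> 0 \<le> Re (qform ?M v)" if v: "v \<in> carrier_vec n" for v
  proof -
    define s where "s = (\<Sum>j<n. complex_of_real (g j) * v $ j)"
    have "qform ?M v = (\<Sum>i<n. \<Sum>j<n. (complex_of_real (g i) * cnj (v $ i)) * (complex_of_real (g j) * v $ j))"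
      using v by (simp add: qform_def ac_simps)
    also have "\<dots> = cnj s * s"
      unfolding s_def cnj_sum sum_product by simp
    also have "\<dots> = complex_of_real ((cmod s)^2)" using mult_cnj_self_cmod[of s] by (simp add: mult.commute)
    finally show ?thesis by simp
  qed
  show ?thesis unfolding psd_mat_def using h q by blast
qed

lemma diag_adj_mult_mult_qform:
  assumes B: "B \<in> carrier_mat n n" and R: "R \<in> carrier_mat n n" and k: "k < n"
  shows "(adj B * R * B) $$ (k,k) = qform R (col B k)"
  using index_adj_mult_mult[OF B R k k] B k by (simp add: qform_def)

lemma psd_spec_decomp_eigenvalues:
  assumes A: "psd_mat n A" and s: "spec_decomp n A (U,l)"
  shows "\<forall>i<n. 0 \<le> l i" "(\<Sum>i<n. complex_of_real (l i)) = mtrace A"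
proof -
  have U: "unitary_mat n U" and Aeq: "A = U * diag_real n l * adj U" using s by (auto simp: spec_decomp_iff)
  have Uc: "U \<in> carrier_mat n n" and aU: "adj U \<in> carrier_mat n n" using U by (auto simp: unitary_mat_def intro: adj_carrier)
  have Ac: "A \<in> carrier_mat n n" using A by (simp add: psd_mat_def hermitian_mat_def)
  have D: "adj U * A * U = diag_real n l" unfolding Aeq using unitary_adj_conj_conj[OF U diag_real_carrier] .
  show "\<forall>i<n. 0 \<le> l i"
  proof (intro allI impI)
    fix i assume i: "i < n"
    have "complex_of_real (l i) = (adj U * A * U) $$ (i,i)" unfolding D using i by simp
    also have "\<dots> = qform A (col U i)" using diag_adj_mult_mult_qform[OF Uc Ac i] .
    finally have "l i = Re (qform A (col U i))" by (metis Re_complex_of_real)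
    moreover have "col U i \<in> carrier_vec n" using Uc i by simp
    ultimately show "0 \<le> l i" using A by (simp add: psd_mat_def)
  qed
  have "mtrace A = mtrace (1\<^sub>m n * (U * diag_real n l * adj U))" unfolding Aeq[symmetric] using Ac by simp
  also have "\<dots> = (\<Sum>k<n. complex_of_real (l k) * (adj U * 1\<^sub>m n * U) $$ (k,k))"
    using mtrace_mult_conj_diag_real[OF Uc one_carrier_mat] .
  also have "\<dots> = (\<Sum>k<n. complex_of_real (l k))"
    using U right_mult_one_mat[OF aU] by (intro sum.cong refl) (simp add: unitary_mat_def)
  finally show "(\<Sum>i<n. complex_of_real (l i)) = mtrace A" by simp
qed

lemma ptrace1_carrier[simp]: "ptrace1 K L R \<in> carrier_mat L L"
  by (simp add: ptrace1_def)

lemma ptrace1_index: "i < L \<Longrightarrow> j < L \<Longrightarrow> ptrace1 K L R $$ (i,j) = (\<Sum>k<K. R $$ (k*L+i, k*L+j))"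
  by (simp add: ptrace1_def)

lemma hermitian_ptrace1:
  assumes h: "hermitian_mat (K*L) R"
  shows "hermitian_mat L (ptrace1 K L R)"
proof -
  have "adj (ptrace1 K L R) = ptrace1 K L R"
  proof (rule eq_matI)
    fix i j assume "i < dim_row (ptrace1 K L R)" "j < dim_col (ptrace1 K L R)"
    hence ij: "i < L" "j < L" by (auto simp: ptrace1_def)
    have "adj (ptrace1 K L R) $$ (i,j) = cnj (\<Sum>k<K. R $$ (k*L+j, k*L+i))"
      using ij by (simp add: ptrace1_index ptrace1_def)
    also have "\<dots> = (\<Sum>k<K. R $$ (k*L+i, k*L+j))"
      using hermitian_index[OF h index_pair_less[OF _ ij(1)] index_pair_less[OF _ ij(2)]] by simp
    finally show "adj (ptrace1 K L R) $$ (i,j) = ptrace1 K L R $$ (i,j)" using ij by (simp add: ptrace1_index)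
  qed (auto simp: ptrace1_def)
  thus ?thesis by (simp add: hermitian_mat_def)
qed

lemma sum_block_index:
  fixes G :: "nat \<Rightarrow> 'a::comm_monoid_add"
  assumes "i1 < K"
  shows "(\<Sum>k<K*L. if k div L = i1 then G k else 0) = (\<Sum>q<L. G (i1*L+q))"
proof -
  have "(\<Sum>k<K*L. if k div L = i1 then G k else 0) =
        (\<Sum>p<K. \<Sum>q<L. if (p*L+q) div L = i1 then G (p*L+q) else 0)"
    by (rule sum_lessThan_mult)
  also have "\<dots> = (\<Sum>p<K. if p = i1 then (\<Sum>q<L. G (p*L+q)) else 0)"
  proof (intro sum.cong refl)
    fix p
    have "(\<Sum>q<L. if (p*L+q) div L = i1 then G (p*L+q) else 0) = (\<Sum>q<L. if p = i1 then G (p*L+q) else 0)"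
      by (intro sum.cong refl) auto
    thus "(\<Sum>q<L. if (p*L+q) div L = i1 then G (p*L+q) else 0) = (if p = i1 then (\<Sum>q<L. G (p*L+q)) else 0)"
      by simp
  qed
  also have "\<dots> = (\<Sum>q<L. G (i1*L+q))" using assms by simp
  finally show ?thesis .
qed

lemma qform_block_vec:
  assumes R: "R \<in> carrier_mat (K*L) (K*L)" and v: "v \<in> carrier_vec L" and k: "k < K"
  shows "qform R (vec (K*L) (\<lambda>m. if m div L = k then v $ (m mod L) else 0))
     = (\<Sum>i<L. \<Sum>j<L. cnj (v $ i) * R $$ (k*L+i, k*L+j) * v $ j)"
proof -
  let ?w = "vec (K*L) (\<lambda>m. if m div L = k then v $ (m mod L) else 0)"
  have "qform R ?w = (\<Sum>a<K*L. \<Sum>b<K*L. cnj (?w $ a) * R $$ (a,b) * ?w $ b)"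
    by (simp add: qform_def)
  also have "\<dots> = (\<Sum>a<K*L. if a div L = k then (\<Sum>b<K*L. if b div L = k then cnj (v $ (a mod L)) * R $$ (a,b) * v $ (b mod L) else 0) else 0)"
  proof (rule sum.cong[OF refl])
    fix a assume "a \<in> {..<K*L}"
    hence a: "a < K*L" by simp
    show "(\<Sum>b<K*L. cnj (?w $ a) * R $$ (a,b) * ?w $ b) = (if a div L = k then (\<Sum>b<K*L. if b div L = k then cnj (v $ (a mod L)) * R $$ (a,b) * v $ (b mod L) else 0) else 0)"
    proof (cases "a div L = k")
      case True thus ?thesis using a by (auto intro!: sum.cong)
    next
      case False thus ?thesis using a by (auto intro!: sum.neutral)
    qed
  qed
  also have "\<dots> = (\<Sum>i<L. (\<Sum>b<K*L. if b div L = k then cnj (v $ ((k*L+i) mod L)) * R $$ (k*L+i,b) * v $ (b mod L) else 0))"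
    using sum_block_index[OF k, where G="\<lambda>a. (\<Sum>b<K*L. if b div L = k then cnj (v $ (a mod L)) * R $$ (a,b) * v $ (b mod L) else 0)" and L=L]
    by simp
  also have "\<dots> = (\<Sum>i<L. \<Sum>j<L. cnj (v $ i) * R $$ (k*L+i, k*L+j) * v $ j)"
  proof (rule sum.cong[OF refl])
    fix i assume "i \<in> {..<L}"
    hence i: "i < L" by simp
    have "(\<Sum>b<K*L. if b div L = k then cnj (v $ ((k*L+i) mod L)) * R $$ (k*L+i,b) * v $ (b mod L) else 0)
        = (\<Sum>j<L. cnj (v $ ((k*L+i) mod L)) * R $$ (k*L+i,k*L+j) * v $ ((k*L+j) mod L))"
      using sum_block_index[OF k, where G="\<lambda>b. cnj (v $ ((k*L+i) mod L)) * R $$ (k*L+i,b) * v $ (b mod L)" and L=L]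
      by simp
    also have "\<dots> = (\<Sum>j<L. cnj (v $ i) * R $$ (k*L+i, k*L+j) * v $ j)"
      using i by (intro sum.cong refl) auto
    finally show "(\<Sum>b<K*L. if b div L = k then cnj (v $ ((k*L+i) mod L)) * R $$ (k*L+i,b) * v $ (b mod L) else 0)
        = (\<Sum>j<L. cnj (v $ i) * R $$ (k*L+i, k*L+j) * v $ j)" .
  qed
  finally show ?thesis .
qed

definition block_vec :: "nat \<Rightarrow> nat \<Rightarrow> nat \<Rightarrow> complex vec \<Rightarrow> complex vec" where
  "block_vec K L k v = vec (K*L) (\<lambda>m. if m div L = k then v $ (m mod L) else 0)"

lemma block_vec_carrier[simp]: "block_vec K L k v \<in> carrier_vec (K*L)"
  by (simp add: block_vec_def)

lemma qform_ptrace1: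
  assumes R: "R \<in> carrier_mat (K*L) (K*L)" and v: "v \<in> carrier_vec L"
  shows "qform (ptrace1 K L R) v = (\<Sum>k<K. qform R (block_vec K L k v))"
proof -
  have "qform (ptrace1 K L R) v = (\<Sum>i<L. \<Sum>j<L. \<Sum>k<K. cnj (v $ i) * R $$ (k*L+i, k*L+j) * v $ j)"
    using v by (simp add: qform_def ptrace1_index sum_distrib_left sum_distrib_right)
  also have "\<dots> = (\<Sum>k<K. \<Sum>i<L. \<Sum>j<L. cnj (v $ i) * R $$ (k*L+i, k*L+j) * v $ j)"
    by (subst sum.swap, subst (2) sum.swap) simp
  also have "\<dots> = (\<Sum>k<K. qform R (block_vec K L k v))"
    unfolding block_vec_def using qform_block_vec[OF R v] by simp
  finally show ?thesis .
qed

lemma psd_ptrace1: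
  assumes A: "psd_mat (K*L) R"
  shows "psd_mat L (ptrace1 K L R)"
  unfolding psd_mat_def
proof (intro conjI ballI)
  have hR: "hermitian_mat (K*L) R" and Rc: "R \<in> carrier_mat (K*L) (K*L)"
    using A by (auto simp: psd_mat_def hermitian_mat_def)
  show "hermitian_mat L (ptrace1 K L R)" using hermitian_ptrace1[OF hR] .
  fix v :: "complex vec" assume v: "v \<in> carrier_vec L"
  have pos: "Im (qform R (block_vec K L k v)) = 0 \<and> 0 \<le> Re (qform R (block_vec K L k v))" for k
    using A by (simp add: psd_mat_def)
  show "Im (qform (ptrace1 K L R) v) = 0" unfolding qform_ptrace1[OF Rc v] Im_sum using pos by simp
  show "0 \<le> Re (qform (ptrace1 K L R) v)" unfolding qform_ptrace1[OF Rc v] Re_sum using pos by (simp add: sum_nonneg)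
qed

lemma mtrace_ptrace1:
  assumes R: "R \<in> carrier_mat (K*L) (K*L)"
  shows "mtrace (ptrace1 K L R) = mtrace R"
proof -
  have "mtrace (ptrace1 K L R) = (\<Sum>i<L. \<Sum>k<K. R $$ (k*L+i, k*L+i))"
    by (simp add: mtrace_def ptrace1_def)
  also have "\<dots> = (\<Sum>k<K. \<Sum>i<L. R $$ (k*L+i, k*L+i))" by (rule sum.swap)
  also have "\<dots> = (\<Sum>m<K*L. R $$ (m,m))" by (rule sum_lessThan_mult[symmetric])
  also have "\<dots> = mtrace R" using R by (simp add: mtrace_def)
  finally show ?thesis .
qed

section \<open>Kronecker products\<close>

lemma tensor_mat_dims[simp]: "dim_row (tensor_mat A B) = dim_row A * dim_row B" "dim_col (tensor_mat A B) = dim_col A * dim_col B"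
  by (auto simp: tensor_mat_def)

lemma index_tensor_mat:
  assumes "i < dim_row A * dim_row B" "j < dim_col A * dim_col B"
  shows "tensor_mat A B $$ (i,j) = A $$ (i div dim_row B, j div dim_col B) * B $$ (i mod dim_row B, j mod dim_col B)"
  using assms by (simp add: tensor_mat_def)

lemma index_pair_bounds: "(i::nat) < m * n \<Longrightarrow> i div n < m \<and> i mod n < n"
  using index_pair_split by blast

lemma div_mod_eq_iff: "(i div n = j div n \<and> i mod n = j mod n) = (i = (j::nat))"
  using div_mult_mod_eq[of i n] div_mult_mod_eq[of j n] by metis

lemma tensor_mat_carrier[simp]:
  assumes "A \<in> carrier_mat n1 m1" "B \<in> carrier_mat n2 m2"
  shows "tensor_mat A B \<in> carrier_mat (n1*n2) (m1*m2)"
  using carrier_matD[OF assms(1)] carrier_matD[OF assms(2)] by (intro carrier_matI) simp_all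

lemma tensor_mat_mult:
  assumes A: "A \<in> carrier_mat n1 k1" and C: "C \<in> carrier_mat k1 m1"
    and B: "B \<in> carrier_mat n2 k2" and D: "D \<in> carrier_mat k2 m2"
  shows "tensor_mat A B * tensor_mat C D = tensor_mat (A * C) (B * D)"
proof (rule eq_matI)
  fix i j assume "i < dim_row (tensor_mat (A * C) (B * D))" "j < dim_col (tensor_mat (A * C) (B * D))"
  hence i: "i < n1*n2" and j: "j < m1*m2" using A B C D by auto
  note si = index_pair_bounds[OF i] and sj = index_pair_bounds[OF j]
  have "(tensor_mat A B * tensor_mat C D) $$ (i,j)
      = (\<Sum>l<k1*k2. tensor_mat A B $$ (i,l) * tensor_mat C D $$ (l,j))"
    using A B C D i j by (intro index_mult_mat_sum) auto
  also have "\<dots> = (\<Sum>p<k1. \<Sum>q<k2. tensor_mat A B $$ (i,p*k2+q) * tensor_mat C D $$ (p*k2+q,j))"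
    by (rule sum_lessThan_mult)
  also have "\<dots> = (\<Sum>p<k1. \<Sum>q<k2. A $$ (i div n2, p) * B $$ (i mod n2, q) * (C $$ (p, j div m2) * D $$ (q, j mod m2)))"
    using A B C D i j by (intro sum.cong refl) (simp add: index_tensor_mat index_pair_less)
  also have "\<dots> = (\<Sum>p<k1. A $$ (i div n2, p) * C $$ (p, j div m2)) * (\<Sum>q<k2. B $$ (i mod n2, q) * D $$ (q, j mod m2))"
    by (simp add: sum_product mult_ac)
  also have "\<dots> = tensor_mat (A * C) (B * D) $$ (i,j)"
    using A B C D i j si sj by (simp add: index_tensor_mat index_mult_mat_sum)
  finally show "(tensor_mat A B * tensor_mat C D) $$ (i,j) = tensor_mat (A * C) (B * D) $$ (i,j)" .
qed (use A B C D in auto)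

lemma adj_tensor_mat: "adj (tensor_mat A B) = tensor_mat (adj A) (adj B)"
proof (rule eq_matI)
  fix i j assume "i < dim_row (tensor_mat (adj A) (adj B))" "j < dim_col (tensor_mat (adj A) (adj B))"
  hence i: "i < dim_col A * dim_col B" and j: "j < dim_row A * dim_row B" by simp_all
  have "adj (tensor_mat A B) $$ (i,j) = cnj (tensor_mat A B $$ (j,i))"
    using i j by simp
  also have "\<dots> = cnj (A $$ (j div dim_row B, i div dim_col B)) * cnj (B $$ (j mod dim_row B, i mod dim_col B))"
    using i j by (simp add: index_tensor_mat)
  also have "\<dots> = tensor_mat (adj A) (adj B) $$ (i,j)"
    using i j index_pair_bounds[OF i] index_pair_bounds[OF j] by (simp add: tensor_mat_def)
  finally show "adj (tensor_mat A B) $$ (i,j) = tensor_mat (adj A) (adj B) $$ (i,j)" .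
qed simp_all

lemma tensor_mat_one: "tensor_mat (1\<^sub>m m) (1\<^sub>m n) = 1\<^sub>m (m*n)"
proof (rule eq_matI)
  fix i j assume "i < dim_row (1\<^sub>m (m*n))" "j < dim_col (1\<^sub>m (m*n))"
  hence i: "i < m*n" and j: "j < m*n" by auto
  have "tensor_mat (1\<^sub>m m) (1\<^sub>m n) $$ (i,j)
      = (if i div n = j div n \<and> i mod n = j mod n then 1 else 0)"
    using i j index_pair_bounds[OF i] index_pair_bounds[OF j] by (simp add: tensor_mat_def)
  also have "\<dots> = 1\<^sub>m (m*n) $$ (i,j)" using i j by (simp only: div_mod_eq_iff index_one_mat)
  finally show "tensor_mat (1\<^sub>m m) (1\<^sub>m n) $$ (i,j) = 1\<^sub>m (m*n) $$ (i,j)" .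
qed auto

lemma unitary_tensor_mat:
  assumes U: "unitary_mat m U" and V: "unitary_mat n V"
  shows "unitary_mat (m*n) (tensor_mat U V)"
proof -
  have c: "U \<in> carrier_mat m m" "adj U \<in> carrier_mat m m" "V \<in> carrier_mat n n" "adj V \<in> carrier_mat n n"
    using unitaryD[OF U] unitaryD[OF V] by auto
  have "tensor_mat U V * adj (tensor_mat U V) = 1\<^sub>m (m*n)"
    unfolding adj_tensor_mat tensor_mat_mult[OF c(1,2) c(3,4)] using unitaryD[OF U] unitaryD[OF V] tensor_mat_one by simp
  moreover have "adj (tensor_mat U V) * tensor_mat U V = 1\<^sub>m (m*n)"
    unfolding adj_tensor_mat tensor_mat_mult[OF c(2,1) c(4,3)] using unitaryD[OF U] unitaryD[OF V] tensor_mat_one by simp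
  ultimately show ?thesis using c by (simp add: unitary_mat_def)
qed

lemma index_tensor_one:
  assumes "V \<in> carrier_mat L L" "i < K*L" "j < K*L"
  shows "tensor_mat (1\<^sub>m K) V $$ (i,j) = (if i div L = j div L then V $$ (i mod L, j mod L) else 0)"
  using assms index_pair_bounds[of i K L] index_pair_bounds[of j K L] by (simp add: tensor_mat_def)

lemma tensor_one_diag_real: "tensor_mat (1\<^sub>m K) (diag_real L q) = diag_real (K*L) (\<lambda>i. q (i mod L))"
proof (rule eq_matI)
  fix i j assume "i < dim_row (diag_real (K*L) (\<lambda>i. q (i mod L)))" "j < dim_col (diag_real (K*L) (\<lambda>i. q (i mod L)))"
  hence i: "i < K*L" and j: "j < K*L" by auto
  have "tensor_mat (1\<^sub>m K) (diag_real L q) $$ (i,j)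
      = (if i div L = j div L \<and> i mod L = j mod L then complex_of_real (q (i mod L)) else 0)"
    using index_tensor_one[OF diag_real_carrier i j] index_pair_bounds[OF i] index_pair_bounds[OF j] by simp
  also have "\<dots> = diag_real (K*L) (\<lambda>i. q (i mod L)) $$ (i,j)" using i j by (simp only: div_mod_eq_iff diag_real_index)
  finally show "tensor_mat (1\<^sub>m K) (diag_real L q) $$ (i,j) = diag_real (K*L) (\<lambda>i. q (i mod L)) $$ (i,j)" .
qed auto

lemma spec_decomp_tensor_one:
  assumes "spec_decomp L S (V,q)"
  shows "spec_decomp (K*L) (tensor_mat (1\<^sub>m K) S) (tensor_mat (1\<^sub>m K) V, \<lambda>i. q (i mod L))"
proof -
  have V: "unitary_mat L V" and S: "S = V * diag_real L q * adj V" using assms by (auto simp: spec_decomp_iff)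
  have Vc: "V \<in> carrier_mat L L" and aVc: "adj V \<in> carrier_mat L L" using unitaryD[OF V] by auto
  have "tensor_mat (1\<^sub>m K) S
      = tensor_mat (1\<^sub>m K) V * tensor_mat (1\<^sub>m K) (diag_real L q) * adj (tensor_mat (1\<^sub>m K) V)"
    unfolding S adj_tensor_mat adj_one
    using tensor_mat_mult[OF one_carrier_mat one_carrier_mat Vc diag_real_carrier]
      tensor_mat_mult[OF one_carrier_mat one_carrier_mat mult_carrier_mat[OF Vc diag_real_carrier] aVc]
    by simp
  thus ?thesis
    using unitary_tensor_mat[OF unitary_one V] by (simp add: spec_decomp_iff tensor_one_diag_real)
qed

lemma mat_fun_tensor_one:
  assumes "hermitian_mat L S"
  shows "mat_fun (K*L) f (tensor_mat (1\<^sub>m K) S) = tensor_mat (1\<^sub>m K) (mat_fun L f S)"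
proof -
  obtain V q where s: "spec_decomp L S (V,q)" using spec_decomp_exists[OF assms] by auto
  have "spec_decomp L (mat_fun L f S) (V, f \<circ> q)"
    using s mat_fun_eq[OF s] by (simp add: spec_decomp_iff)
  from spec_decomp_tensor_one[OF this, of K]
  have "tensor_mat (1\<^sub>m K) (mat_fun L f S)
      = tensor_mat (1\<^sub>m K) V * diag_real (K*L) (f \<circ> (\<lambda>i. q (i mod L))) * adj (tensor_mat (1\<^sub>m K) V)"
    by (simp add: spec_decomp_iff comp_def)
  thus ?thesis using mat_fun_eq[OF spec_decomp_tensor_one[OF s, of K]] by simp
qed

lemma mtrace_mult_tensor_one:
  assumes R: "R \<in> carrier_mat (K*L) (K*L)" and Z: "Z \<in> carrier_mat L L"
  shows "mtrace (R * tensor_mat (1\<^sub>m K) Z) = mtrace (ptrace1 K L R * Z)"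
proof -
  have Zc: "tensor_mat (1\<^sub>m K) Z \<in> carrier_mat (K*L) (K*L)" using Z by simp
  have entry: "(R * tensor_mat (1\<^sub>m K) Z) $$ (a*L+x, a*L+x) = (\<Sum>y<L. R $$ (a*L+x, a*L+y) * Z $$ (y,x))"
    if "a < K" "x < L" for a x
  proof -
    have ax: "a*L+x < K*L" using index_pair_less[OF that] .
    have "(R * tensor_mat (1\<^sub>m K) Z) $$ (a*L+x, a*L+x)
        = (\<Sum>b<K. \<Sum>y<L. R $$ (a*L+x, b*L+y) * tensor_mat (1\<^sub>m K) Z $$ (b*L+y, a*L+x))"
      using index_mult_mat_sum[OF R Zc ax ax] by (simp only: sum_lessThan_mult)
    also have "\<dots> = (\<Sum>b<K. if b = a then (\<Sum>y<L. R $$ (a*L+x, b*L+y) * Z $$ (y,x)) else 0)"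
      using that ax index_pair_less by (intro sum.cong refl) (auto simp: index_tensor_one[OF Z])
    finally show ?thesis using that by simp
  qed
  have "mtrace (R * tensor_mat (1\<^sub>m K) Z) = (\<Sum>a<K. \<Sum>x<L. (R * tensor_mat (1\<^sub>m K) Z) $$ (a*L+x, a*L+x))"
    using R by (simp add: mtrace_def sum_lessThan_mult)
  also have "\<dots> = (\<Sum>x<L. \<Sum>y<L. (\<Sum>a<K. R $$ (a*L+x, a*L+y)) * Z $$ (y,x))"
    using entry by (simp add: sum.swap[of _ "{..<K}"] sum_distrib_right)
  also have "\<dots> = mtrace (ptrace1 K L R * Z)"
    using Z by (simp add: mtrace_eq_sum[OF mult_carrier_mat[OF ptrace1_carrier Z]]
        index_mult_mat_sum[OF ptrace1_carrier Z] ptrace1_index sum_distrib_right)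
  finally show ?thesis .
qed

lemma tensor_one_mult_block_vec:
  assumes S: "S \<in> carrier_mat L L" and v: "v \<in> carrier_vec L" and k: "k < K"
  shows "tensor_mat (1\<^sub>m K) S *\<^sub>v block_vec K L k v = block_vec K L k (S *\<^sub>v v)"
proof (rule eq_vecI)
  fix i assume "i < dim_vec (block_vec K L k (S *\<^sub>v v))"
  hence i: "i < K*L" by (simp add: block_vec_def)
  note si = index_pair_bounds[OF i]
  have Sc: "tensor_mat (1\<^sub>m K) S \<in> carrier_mat (K*L) (K*L)" using S by simp
  have "(tensor_mat (1\<^sub>m K) S *\<^sub>v block_vec K L k v) $ i
      = (\<Sum>b<K. \<Sum>y<L. tensor_mat (1\<^sub>m K) S $$ (i, b*L+y) * block_vec K L k v $ (b*L+y))"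
    using index_mult_mat_vec_sum[OF Sc block_vec_carrier i] by (simp only: sum_lessThan_mult)
  also have "\<dots> = (\<Sum>b<K. if b = k then (if i div L = k then (\<Sum>y<L. S $$ (i mod L, y) * v $ y) else 0) else 0)"
    using i index_pair_less by (intro sum.cong refl) (auto simp: index_tensor_one[OF S] block_vec_def)
  also have "\<dots> = block_vec K L k (S *\<^sub>v v) $ i"
    using S v i si k by (simp add: block_vec_def index_mult_mat_vec_sum[OF S v] del: index_mult_mat_vec)
  finally show "(tensor_mat (1\<^sub>m K) S *\<^sub>v block_vec K L k v) $ i = block_vec K L k (S *\<^sub>v v) $ i" .
qed (use S in \<open>simp add: block_vec_def\<close>)

section \<open>Unitary invariance of the relative entropy\<close>

lemma mtrace_unitary_conj:
  assumes Q: "unitary_mat n Q" and M: "M \<in> carrier_mat n n"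
  shows "mtrace (Q * M * adj Q) = mtrace M"
proof -
  have Qc: "Q \<in> carrier_mat n n" and aQ: "adj Q \<in> carrier_mat n n" and QQ: "adj Q * Q = 1\<^sub>m n"
    using Q by (auto simp: unitary_mat_def intro: adj_carrier)
  have QM: "Q * M \<in> carrier_mat n n" using Qc M by auto
  have "mtrace (Q * M * adj Q) = mtrace (adj Q * (Q * M))" using mtrace_comm[OF QM aQ] .
  also have "adj Q * (Q * M) = (adj Q * Q) * M" using assoc_mult_mat[OF aQ Qc M] by simp
  also have "\<dots> = M" using QQ M by simp
  finally show ?thesis .
qed

lemma mult_mat_vec_zero: "A \<in> carrier_mat n m \<Longrightarrow> A *\<^sub>v 0\<^sub>v m = 0\<^sub>v n"
  by (intro eq_vecI) (auto simp: index_mult_mat_vec_sum)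

lemma kernel_incl_unitary_conj:
  assumes Q: "unitary_mat n Q" and X: "X \<in> carrier_mat n n" and Y: "Y \<in> carrier_mat n n"
    and s: "\<forall>v \<in> carrier_vec n. Y *\<^sub>v v = 0\<^sub>v n \<longrightarrow> X *\<^sub>v v = 0\<^sub>v n"
  shows "\<forall>v \<in> carrier_vec n. (Q * Y * adj Q) *\<^sub>v v = 0\<^sub>v n \<longrightarrow> (Q * X * adj Q) *\<^sub>v v = 0\<^sub>v n"
proof (intro ballI impI)
  fix v :: "complex vec" assume v: "v \<in> carrier_vec n" and z: "(Q * Y * adj Q) *\<^sub>v v = 0\<^sub>v n"
  have Qc: "Q \<in> carrier_mat n n" and aQ: "adj Q \<in> carrier_mat n n" and QQ: "adj Q * Q = 1\<^sub>m n"
    using Q by (auto simp: unitary_mat_def intro: adj_carrier)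
  define u where "u = adj Q *\<^sub>v v"
  have u: "u \<in> carrier_vec n" unfolding u_def using aQ v by auto
  have Yu: "Y *\<^sub>v u \<in> carrier_vec n" using Y u by auto
  have "(Q * Y * adj Q) *\<^sub>v v = Q *\<^sub>v (Y *\<^sub>v u)"
    unfolding u_def using assoc_mult_mat_vec[OF mult_carrier_mat[OF Qc Y] aQ v] assoc_mult_mat_vec[OF Qc Y u[unfolded u_def]]
    by (simp only:)
  hence "Q *\<^sub>v (Y *\<^sub>v u) = 0\<^sub>v n" using z by simp
  hence "adj Q *\<^sub>v (Q *\<^sub>v (Y *\<^sub>v u)) = 0\<^sub>v n" using mult_mat_vec_zero[OF aQ] by simp
  hence "Y *\<^sub>v u = 0\<^sub>v n"
    using assoc_mult_mat_vec[OF aQ Qc Yu] QQ Yu by simp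
  hence "X *\<^sub>v u = 0\<^sub>v n" using s u by blast
  moreover have "(Q * X * adj Q) *\<^sub>v v = Q *\<^sub>v (X *\<^sub>v u)"
    unfolding u_def using assoc_mult_mat_vec[OF mult_carrier_mat[OF Qc X] aQ v] assoc_mult_mat_vec[OF Qc X u[unfolded u_def]]
    by (simp only:)
  ultimately show "(Q * X * adj Q) *\<^sub>v v = 0\<^sub>v n" using mult_mat_vec_zero[OF Qc] by simp
qed

lemma unitary_conj_mult:
  assumes Q: "unitary_mat n Q" and A: "A \<in> carrier_mat n n" and B: "B \<in> carrier_mat n n"
  shows "(Q * A * adj Q) * (Q * B * adj Q) = Q * (A * B) * adj Q"
proof -
  have Qc: "Q \<in> carrier_mat n n" and aQ: "adj Q \<in> carrier_mat n n" and QQ: "adj Q * Q = 1\<^sub>m n"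
    using Q by (auto simp: unitary_mat_def intro: adj_carrier)
  have c: "Q * A \<in> carrier_mat n n" "Q * B \<in> carrier_mat n n" "B * adj Q \<in> carrier_mat n n" using Qc A B aQ by auto
  have "(Q * A * adj Q) * (Q * B * adj Q) = (Q * A) * (adj Q * (Q * B * adj Q))"
    using assoc_mult_mat[OF c(1) aQ mult_carrier_mat[OF c(2) aQ]] .
  also have "adj Q * (Q * B * adj Q) = (adj Q * Q) * (B * adj Q)"
    using assoc_mult_mat[OF aQ c(2) aQ] assoc_mult_mat[OF aQ Qc B] assoc_mult_mat[OF mult_carrier_mat[OF aQ Qc] B aQ] by simp
  also have "\<dots> = B * adj Q" using QQ left_mult_one_mat[OF c(3)] by simp
  also have "(Q * A) * (B * adj Q) = Q * (A * B) * adj Q"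
    using assoc_mult_mat[OF Qc A B] assoc_mult_mat[OF c(1) B aQ] by simp
  finally show ?thesis .
qed

lemma conj_minus_distrib:
  assumes Q: "Q \<in> carrier_mat n n" and A: "A \<in> carrier_mat n n" and B: "B \<in> carrier_mat n n"
  shows "Q * A * adj Q - Q * B * adj Q = Q * (A - B) * adj Q"
proof -
  have aQ: "adj Q \<in> carrier_mat n n" using Q adj_carrier by blast
  have "Q * (A - B) = Q * A - Q * B" using mult_minus_distrib_mat[OF Q A B] .
  moreover have "(Q * A - Q * B) * adj Q = Q * A * adj Q - Q * B * adj Q"
    using minus_mult_distrib_mat[of "Q * A" n n "Q * B" "adj Q" n] Q A B aQ by auto
  ultimately show ?thesis by simp
qed

lemma rel_entropy_unitary_conj:
  assumes Q: "unitary_mat n Q" and hX: "hermitian_mat n X" and hY: "hermitian_mat n Y"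
  shows "rel_entropy n (Q * X * adj Q) (Q * Y * adj Q) = rel_entropy n X Y"
proof -
  have Qc: "Q \<in> carrier_mat n n" and aQ: "adj Q \<in> carrier_mat n n" using Q by (auto simp: unitary_mat_def intro: adj_carrier)
  have Xc: "X \<in> carrier_mat n n" and Yc: "Y \<in> carrier_mat n n" using hX hY by (auto simp: hermitian_mat_def)
  have X'c: "Q * X * adj Q \<in> carrier_mat n n" and Y'c: "Q * Y * adj Q \<in> carrier_mat n n" using Qc Xc Yc aQ by auto
  have sup: "(\<forall>v \<in> carrier_vec n. (Q * Y * adj Q) *\<^sub>v v = 0\<^sub>v n \<longrightarrow> (Q * X * adj Q) *\<^sub>v v = 0\<^sub>v n)
     = (\<forall>v \<in> carrier_vec n. Y *\<^sub>v v = 0\<^sub>v n \<longrightarrow> X *\<^sub>v v = 0\<^sub>v n)"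
  proof
    assume s: "\<forall>v \<in> carrier_vec n. (Q * Y * adj Q) *\<^sub>v v = 0\<^sub>v n \<longrightarrow> (Q * X * adj Q) *\<^sub>v v = 0\<^sub>v n"
    have "\<forall>v \<in> carrier_vec n. (adj Q * (Q * Y * adj Q) * adj (adj Q)) *\<^sub>v v = 0\<^sub>v n \<longrightarrow> (adj Q * (Q * X * adj Q) * adj (adj Q)) *\<^sub>v v = 0\<^sub>v n"
      using kernel_incl_unitary_conj[OF unitary_adj[OF Q] X'c Y'c s] .
    thus "\<forall>v \<in> carrier_vec n. Y *\<^sub>v v = 0\<^sub>v n \<longrightarrow> X *\<^sub>v v = 0\<^sub>v n"
      using unitary_adj_conj_conj[OF Q Xc] unitary_adj_conj_conj[OF Q Yc] by simp
  next
    assume "\<forall>v \<in> carrier_vec n. Y *\<^sub>v v = 0\<^sub>v n \<longrightarrow> X *\<^sub>v v = 0\<^sub>v n"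
    thus "\<forall>v \<in> carrier_vec n. (Q * Y * adj Q) *\<^sub>v v = 0\<^sub>v n \<longrightarrow> (Q * X * adj Q) *\<^sub>v v = 0\<^sub>v n"
      using kernel_incl_unitary_conj[OF Q Xc Yc] by blast
  qed
  have LX: "mat_log n X \<in> carrier_mat n n" and LY: "mat_log n Y \<in> carrier_mat n n"
    unfolding mat_log_def using mat_fun_carrier hX hY by auto
  have "mtrace ((Q * X * adj Q) * (mat_log n (Q * X * adj Q) - mat_log n (Q * Y * adj Q)))
      = mtrace ((Q * X * adj Q) * (Q * (mat_log n X - mat_log n Y) * adj Q))"
    unfolding mat_log_def mat_fun_unitary_conj[OF hX Q] mat_fun_unitary_conj[OF hY Q]
    using conj_minus_distrib[OF Qc LX LY] unfolding mat_log_def by simp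
  also have "\<dots> = mtrace (Q * (X * (mat_log n X - mat_log n Y)) * adj Q)"
    using unitary_conj_mult[OF Q Xc minus_carrier_mat[OF LY]] LX by simp
  also have "\<dots> = mtrace (X * (mat_log n X - mat_log n Y))"
    using mtrace_unitary_conj[OF Q mult_carrier_mat[OF Xc minus_carrier_mat[OF LY]]] .
  finally have tr: "mtrace ((Q * X * adj Q) * (mat_log n (Q * X * adj Q) - mat_log n (Q * Y * adj Q)))
      = mtrace (X * (mat_log n X - mat_log n Y))" .
  show ?thesis unfolding rel_entropy_def sup tr by simp
qed

section \<open>Klein's inequality\<close>

lemma klein_term_le:
  fixes p q w :: real
  assumes "0 \<le> p" "0 \<le> q" "0 \<le> w" "q = 0 \<Longrightarrow> p * w = 0"
  shows "w * (p - q) \<le> w * (p * ln p - p * ln q)"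
proof (cases "p = 0")
  case True thus ?thesis using assms by simp
next
  case False
  hence p: "p > 0" using assms by simp
  show ?thesis
  proof (cases "q = 0")
    case True
    hence "w = 0" using assms p by simp
    thus ?thesis by simp
  next
    case False
    hence q: "q > 0" using assms by simp
    have "ln (q / p) \<le> q / p - 1" using ln_le_minus_one[of "q/p"] p q by simp
    hence "p * ln (q / p) \<le> p * (q / p - 1)" using p by (simp add: mult_left_mono)
    hence "p * (ln q - ln p) \<le> q - p" using p q by (simp add: ln_div right_diff_distrib)
    hence "p - q \<le> p * ln p - p * ln q" by (simp add: algebra_simps)
    thus ?thesis using assms(3) by (simp add: mult_left_mono)
  qed
qed

text \<open>Each summand is bounded via \<open>ln x \<le> x - 1\<close>; the bounds add up to zero because \<open>w\<close> is doubly
  stochastic.\<close>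
lemma gibbs_weighted_sum_le:
  fixes p q :: "nat \<Rightarrow> real" and w :: "nat \<Rightarrow> nat \<Rightarrow> real"
  assumes p0: "\<And>i. i < L \<Longrightarrow> 0 \<le> p i" and p1: "(\<Sum>i<L. p i) = 1"
    and q0: "\<And>l. l < L \<Longrightarrow> 0 \<le> q l" and q1: "(\<Sum>l<L. q l) = 1"
    and w0: "\<And>i l. i < L \<Longrightarrow> l < L \<Longrightarrow> 0 \<le> w i l"
    and wr: "\<And>i. i < L \<Longrightarrow> (\<Sum>l<L. w i l) = 1"
    and wc: "\<And>l. l < L \<Longrightarrow> (\<Sum>i<L. w i l) = 1"
    and supp: "\<And>l. l < L \<Longrightarrow> q l = 0 \<Longrightarrow> (\<Sum>i<L. p i * w i l) = 0"
  shows "(\<Sum>l<L. ln (q l) * (\<Sum>i<L. p i * w i l)) \<le> (\<Sum>i<L. p i * ln (p i))"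
proof -
  have pw0: "p i * w i l = 0" if "i < L" "l < L" "q l = 0" for i l
  proof -
    have "(\<Sum>i<L. p i * w i l) = 0" using supp that by simp
    moreover have "\<forall>i\<in>{..<L}. 0 \<le> p i * w i l" using p0 w0 that by simp
    ultimately show ?thesis using that by (subst (asm) sum_nonneg_eq_0_iff) auto
  qed
  have "(\<Sum>i<L. \<Sum>l<L. w i l * (p i - q l)) \<le> (\<Sum>i<L. \<Sum>l<L. w i l * (p i * ln (p i) - p i * ln (q l)))"
  proof (intro sum_mono)
    fix i l assume "i \<in> {..<L}" "l \<in> {..<L}"
    hence il: "i < L" "l < L" by auto
    show "w i l * (p i - q l) \<le> w i l * (p i * ln (p i) - p i * ln (q l))"
      by (rule klein_term_le[OF p0[OF il(1)] q0[OF il(2)] w0[OF il] pw0[OF il]])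
  qed
  moreover have "(\<Sum>i<L. \<Sum>l<L. w i l * (p i - q l)) = 0"
  proof -
    have e1: "(\<Sum>i<L. \<Sum>l<L. w i l * (p i - q l)) = (\<Sum>i<L. \<Sum>l<L. w i l * p i) - (\<Sum>i<L. \<Sum>l<L. w i l * q l)"
      by (simp add: right_diff_distrib sum_subtractf)
    have e2: "(\<Sum>i<L. \<Sum>l<L. w i l * p i) = (\<Sum>i<L. p i * (\<Sum>l<L. w i l))"
      by (simp add: sum_distrib_left mult.commute)
    have e3: "(\<Sum>i<L. \<Sum>l<L. w i l * q l) = (\<Sum>l<L. q l * (\<Sum>i<L. w i l))"
      by (subst sum.swap) (simp add: sum_distrib_left mult.commute)
    have "(\<Sum>i<L. \<Sum>l<L. w i l * (p i - q l)) = (\<Sum>i<L. p i * (\<Sum>l<L. w i l)) - (\<Sum>l<L. q l * (\<Sum>i<L. w i l))"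
      using e1 e2 e3 by simp
    also have "\<dots> = 0" using wr wc p1 q1 by simp
    finally show ?thesis .
  qed
  moreover have "(\<Sum>i<L. \<Sum>l<L. w i l * (p i * ln (p i) - p i * ln (q l)))
      = (\<Sum>i<L. p i * ln (p i)) - (\<Sum>l<L. ln (q l) * (\<Sum>i<L. p i * w i l))"
  proof -
    have e1: "(\<Sum>i<L. \<Sum>l<L. w i l * (p i * ln (p i) - p i * ln (q l)))
        = (\<Sum>i<L. \<Sum>l<L. w i l * (p i * ln (p i))) - (\<Sum>i<L. \<Sum>l<L. w i l * (p i * ln (q l)))"
      by (simp add: right_diff_distrib sum_subtractf)
    have e2: "(\<Sum>i<L. \<Sum>l<L. w i l * (p i * ln (p i))) = (\<Sum>i<L. p i * ln (p i) * (\<Sum>l<L. w i l))"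
      by (simp add: sum_distrib_right sum_distrib_left mult.commute)
    have e3: "(\<Sum>i<L. \<Sum>l<L. w i l * (p i * ln (q l))) = (\<Sum>l<L. ln (q l) * (\<Sum>i<L. p i * w i l))"
      by (subst sum.swap) (simp add: sum_distrib_left mult.commute mult.left_commute)
    have "(\<Sum>i<L. \<Sum>l<L. w i l * (p i * ln (p i) - p i * ln (q l)))
        = (\<Sum>i<L. p i * ln (p i) * (\<Sum>l<L. w i l)) - (\<Sum>l<L. ln (q l) * (\<Sum>i<L. p i * w i l))"
      using e1 e2 e3 by simp
    also have "\<dots> = (\<Sum>i<L. p i * ln (p i)) - (\<Sum>l<L. ln (q l) * (\<Sum>i<L. p i * w i l))"
      using wr by simp
    finally show ?thesis .
  qed
  ultimately show ?thesis by linarith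
qed

lemma klein_weighted_sum_le:
  fixes p q :: "nat \<Rightarrow> real" and w :: "nat \<Rightarrow> nat \<Rightarrow> real" and c :: real
  assumes p0: "\<And>i. i < L \<Longrightarrow> 0 \<le> p i" and p1: "(\<Sum>i<L. p i) = 1"
    and q0: "\<And>l. l < L \<Longrightarrow> 0 \<le> q l" and q1: "(\<Sum>l<L. q l) = 1"
    and w0: "\<And>i l. i < L \<Longrightarrow> l < L \<Longrightarrow> 0 \<le> w i l"
    and wr: "\<And>i. i < L \<Longrightarrow> (\<Sum>l<L. w i l) = 1"
    and wc: "\<And>l. l < L \<Longrightarrow> (\<Sum>i<L. w i l) = 1"
    and supp: "\<And>l. l < L \<Longrightarrow> q l = 0 \<Longrightarrow> (\<Sum>i<L. p i * w i l) = 0"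
    and c: "c > 0"
  shows "- ln c \<le> (\<Sum>i<L. p i * ln (p i)) - (\<Sum>l<L. ln (c * q l) * (\<Sum>i<L. p i * w i l))"
proof -
  define t where "t = (\<lambda>l. \<Sum>i<L. p i * w i l)"
  have t_sum: "(\<Sum>l<L. t l) = 1"
  proof -
    have "(\<Sum>l<L. t l) = (\<Sum>i<L. p i * (\<Sum>l<L. w i l))"
      unfolding t_def by (subst sum.swap) (simp add: sum_distrib_left)
    also have "\<dots> = (\<Sum>i<L. p i)" using wr by simp
    finally show ?thesis using p1 by simp
  qed
  have lnsplit: "ln (c * q l) * t l = ln c * t l + ln (q l) * t l" if "l < L" for l
  proof (cases "q l = 0")
    case True
    have "t l = 0" unfolding t_def using supp[OF that True] .
    thus ?thesis by simp
  next
    case False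
    hence "q l > 0" using q0 that by (simp add: order_le_neq_trans)
    thus ?thesis using c by (simp add: ln_mult algebra_simps)
  qed
  have "(\<Sum>l<L. ln (c * q l) * t l) = ln c * (\<Sum>l<L. t l) + (\<Sum>l<L. ln (q l) * t l)"
    using lnsplit by (simp add: sum.distrib sum_distrib_left)
  also have "\<dots> = ln c + (\<Sum>l<L. ln (q l) * t l)" using t_sum by simp
  finally have A: "(\<Sum>l<L. ln (c * q l) * t l) = ln c + (\<Sum>l<L. ln (q l) * t l)" .
  have "(\<Sum>l<L. ln (q l) * t l) \<le> (\<Sum>i<L. p i * ln (p i))"
    unfolding t_def by (rule gibbs_weighted_sum_le[OF p0 p1 q0 q1 w0 wr wc supp])
  thus ?thesis using A unfolding t_def by linarith
qed

lemma unitary_conj_diag_real_mult_col: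
  assumes B: "unitary_mat n B" and A: "A = B * diag_real n d * adj B" and m: "m < n"
  shows "A *\<^sub>v col B m = complex_of_real (d m) \<cdot>\<^sub>v col B m"
proof -
  have Bc: "B \<in> carrier_mat n n" and aB: "adj B \<in> carrier_mat n n" and BB: "adj B * B = 1\<^sub>m n"
    using B by (auto simp: unitary_mat_def intro: adj_carrier)
  have BD: "B * diag_real n d \<in> carrier_mat n n" using Bc by auto
  have "A * B = B * diag_real n d * (adj B * B)" unfolding A using assoc_mult_mat[OF BD aB Bc] .
  hence AB: "A * B = B * diag_real n d" using BB BD by simp
  have Ac: "A \<in> carrier_mat n n" unfolding A using BD aB by auto
  show ?thesis
  proof (rule eq_vecI)
    fix i assume "i < dim_vec (complex_of_real (d m) \<cdot>\<^sub>v col B m)"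
    hence i: "i < n" using Bc by simp
    have dB: "dim_row B = n" using Bc by blast
    have cv: "col B m \<in> carrier_vec n" by (rule carrier_vecI) (simp add: dB)
    have "(A *\<^sub>v col B m) $ i = (\<Sum>k<n. A $$ (i,k) * col B m $ k)"
      using index_mult_mat_vec_sum[OF Ac cv i] .
    also have "\<dots> = (A * B) $$ (i,m)" using index_mult_mat_sum[OF Ac Bc i m] Bc m by simp
    also have "\<dots> = B $$ (i,m) * complex_of_real (d m)" unfolding AB using mult_diag_real_index[OF Bc i m] .
    finally show "(A *\<^sub>v col B m) $ i = (complex_of_real (d m) \<cdot>\<^sub>v col B m) $ i"
      using i m Bc by (simp add: mult.commute)
  qed (use Bc Ac in auto)
qed

lemma density_spec_decomp_eigenvalues:
  assumes "density_mat n A" "spec_decomp n A (U,l)"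
  shows "\<And>i. i < n \<Longrightarrow> 0 \<le> l i" and "(\<Sum>i<n. l i) = 1"
proof -
  show "\<And>i. i < n \<Longrightarrow> 0 \<le> l i"
    using psd_spec_decomp_eigenvalues(1) assms by (auto simp: density_mat_def)
  have "complex_of_real (\<Sum>i<n. l i) = 1"
    using psd_spec_decomp_eigenvalues(2)[of n A U l] assms by (simp add: density_mat_def of_real_sum)
  thus "(\<Sum>i<n. l i) = 1" by (metis of_real_eq_1_iff)
qed

lemma unitary_sum_cmod_sq:
  assumes W: "unitary_mat n W"
  shows "\<And>i. i < n \<Longrightarrow> (\<Sum>l<n. (cmod (W $$ (l,i)))\<^sup>2) = 1"
    and "\<And>l. l < n \<Longrightarrow> (\<Sum>i<n. (cmod (W $$ (l,i)))\<^sup>2) = 1"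
proof -
  have Wc: "W \<in> carrier_mat n n" using unitaryD[OF W] by simp
  fix i assume i: "i < n"
  have "complex_of_real (\<Sum>l<n. (cmod (W $$ (l,i)))\<^sup>2) = (\<Sum>l<n. cnj (W $$ (l,i)) * W $$ (l,i))"
    unfolding of_real_sum mult_cnj_self_cmod[symmetric] by (simp add: mult.commute)
  also have "\<dots> = 1" using index_adj_mult[OF Wc i i] unitaryD(3)[OF W] i by simp
  finally show "(\<Sum>l<n. (cmod (W $$ (l,i)))\<^sup>2) = 1" by (metis of_real_eq_1_iff)
next
  have Wc: "W \<in> carrier_mat n n" using unitaryD[OF W] by simp
  fix l assume l: "l < n"
  have "complex_of_real (\<Sum>i<n. (cmod (W $$ (l,i)))\<^sup>2) = (\<Sum>i<n. W $$ (l,i) * cnj (W $$ (l,i)))"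
    unfolding of_real_sum mult_cnj_self_cmod ..
  also have "\<dots> = 1" using index_mult_adj[OF Wc l l] unitaryD(2)[OF W] l by simp
  finally show "(\<Sum>i<n. (cmod (W $$ (l,i)))\<^sup>2) = 1" by (metis of_real_eq_1_iff)
qed

lemma mult_of_real_mult_cnj: "z * complex_of_real r * cnj z = complex_of_real (r * (cmod z)\<^sup>2)"
proof -
  have "z * complex_of_real r * cnj z = complex_of_real r * (z * cnj z)" by (simp only: ac_simps)
  thus ?thesis by (simp only: mult_cnj_self_cmod of_real_mult)
qed

lemma diag_adj_conj_spec_decomp:
  assumes "spec_decomp n \<tau> (U,p)" and V: "unitary_mat n V" and l: "l < n"
  shows "(adj V * \<tau> * V) $$ (l,l) = complex_of_real (\<Sum>i<n. p i * (cmod ((adj V * U) $$ (l,i)))\<^sup>2)"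
proof -
  have U: "unitary_mat n U" and \<tau>: "\<tau> = U * diag_real n p * adj U" using assms(1) by (auto simp: spec_decomp_iff)
  have Uc: "U \<in> carrier_mat n n" and aV: "adj V \<in> carrier_mat n n" using unitaryD[OF U] unitaryD[OF V] by auto
  have Wc: "adj V * U \<in> carrier_mat n n" using aV Uc by simp
  have "adj V * \<tau> * V = (adj V * U) * diag_real n p * adj (adj V * U)"
    unfolding \<tau> using conj_mult_conj[OF aV Uc diag_real_carrier] by simp
  hence "(adj V * \<tau> * V) $$ (l,l) = (\<Sum>i<n. (adj V * U) $$ (l,i) * complex_of_real (p i) * cnj ((adj V * U) $$ (l,i)))"
    using index_conj_diag_real[OF Wc l l] by simp
  also have "\<dots> = (\<Sum>i<n. complex_of_real (p i * (cmod ((adj V * U) $$ (l,i)))\<^sup>2))"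
    by (intro sum.cong refl) (rule mult_of_real_mult_cnj)
  finally show ?thesis by (simp add: of_real_sum)
qed

lemma mtrace_mult_mat_log_self:
  assumes "spec_decomp n \<tau> (U,p)"
  shows "mtrace (\<tau> * mat_log n \<tau>) = complex_of_real (\<Sum>i<n. p i * ln (p i))"
proof -
  have U: "unitary_mat n U" and \<tau>: "\<tau> = U * diag_real n p * adj U" using assms by (auto simp: spec_decomp_iff)
  have Uc: "U \<in> carrier_mat n n" using unitaryD[OF U] by simp
  have \<tau>c: "\<tau> \<in> carrier_mat n n"
    unfolding \<tau> using mult_carrier_mat[OF mult_carrier_mat[OF Uc diag_real_carrier] adj_carrier[OF Uc]] .
  have D: "adj U * \<tau> * U = diag_real n p" unfolding \<tau> using unitary_adj_conj_conj[OF U diag_real_carrier] .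
  have "mtrace (\<tau> * mat_log n \<tau>) = (\<Sum>k<n. complex_of_real (ln (p k)) * (adj U * \<tau> * U) $$ (k,k))"
    unfolding mat_log_def mat_fun_eq[OF assms] using mtrace_mult_conj_diag_real[OF Uc \<tau>c] by simp
  also have "\<dots> = complex_of_real (\<Sum>i<n. p i * ln (p i))"
    unfolding D by (simp add: of_real_sum mult.commute)
  finally show ?thesis .
qed

lemma spec_decomp_smult:
  assumes "spec_decomp n \<sigma> (V,q)"
  shows "spec_decomp n (complex_of_real c \<cdot>\<^sub>m \<sigma>) (V, \<lambda>l. c * q l)"
proof -
  have V: "unitary_mat n V" and \<sigma>: "\<sigma> = V * diag_real n q * adj V" using assms by (auto simp: spec_decomp_iff)
  have Vc: "V \<in> carrier_mat n n" using unitaryD[OF V] by simp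
  have "complex_of_real c \<cdot>\<^sub>m diag_real n q = diag_real n (\<lambda>l. c * q l)"
    by (rule eq_matI) auto
  hence "V * diag_real n (\<lambda>l. c * q l) * adj V = V * (complex_of_real c \<cdot>\<^sub>m diag_real n q) * adj V" by simp
  also have "\<dots> = (complex_of_real c \<cdot>\<^sub>m (V * diag_real n q)) * adj V"
    using mult_smult_distrib[OF Vc diag_real_carrier] by simp
  also have "\<dots> = complex_of_real c \<cdot>\<^sub>m \<sigma>"
    unfolding \<sigma> using mult_smult_assoc_mat[OF mult_carrier_mat[OF Vc diag_real_carrier] adj_carrier[OF Vc]] .
  finally have "complex_of_real c \<cdot>\<^sub>m \<sigma> = V * diag_real n (\<lambda>l. c * q l) * adj V" ..
  thus ?thesis using V by (simp add: spec_decomp_iff)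
qed

text \<open>In eigenbases \<open>U\<close> of \<open>\<tau>\<close> and \<open>V\<close> of \<open>\<sigma>\<close> this is \<open>klein_weighted_sum_le\<close> for the doubly stochastic
  weights \<open>|(V\<^sup>\<dagger> U)\<^sub>l\<^sub>i|\<^sup>2\<close>; the support hypothesis makes the junk value \<open>ln 0 = 0\<close> harmless.\<close>
lemma klein_inequality:
  assumes \<tau>: "density_mat L \<tau>" and \<sigma>: "density_mat L \<sigma>" and c: "c > 0"
    and supp: "\<And>v. v \<in> carrier_vec L \<Longrightarrow> \<sigma> *\<^sub>v v = 0\<^sub>v L \<Longrightarrow> qform \<tau> v = 0"
  shows "vn_entropy L \<tau> - ln c \<le> - Re (mtrace (\<tau> * mat_log L (complex_of_real c \<cdot>\<^sub>m \<sigma>)))"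
proof -
  have \<tau>c: "\<tau> \<in> carrier_mat L L" using \<tau> by (simp add: density_mat_def psd_mat_def hermitian_mat_def)
  obtain U p where sU: "spec_decomp L \<tau> (U,p)"
    using spec_decomp_exists[of L \<tau>] \<tau> by (auto simp: density_mat_def psd_mat_def)
  obtain V q where sV: "spec_decomp L \<sigma> (V,q)"
    using spec_decomp_exists[of L \<sigma>] \<sigma> by (auto simp: density_mat_def psd_mat_def)
  have V: "unitary_mat L V" and \<sigma>eq: "\<sigma> = V * diag_real L q * adj V" using sV by (auto simp: spec_decomp_iff)
  have Vc: "V \<in> carrier_mat L L" using unitaryD[OF V] by simp
  define W where "W = adj V * U"
  have W: "unitary_mat L W"
    unfolding W_def using unitary_mult[OF unitary_adj[OF V]] sU by (simp add: spec_decomp_iff)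
  define w where "w i l = (cmod (W $$ (l,i)))\<^sup>2" for i l
  have t: "(adj V * \<tau> * V) $$ (l,l) = complex_of_real (\<Sum>i<L. p i * w i l)" if "l < L" for l
    using diag_adj_conj_spec_decomp[OF sU V that] by (simp add: W_def w_def)
  have "mtrace (\<tau> * mat_log L (complex_of_real c \<cdot>\<^sub>m \<sigma>))
      = (\<Sum>l<L. complex_of_real (ln (c * q l)) * (adj V * \<tau> * V) $$ (l,l))"
    unfolding mat_log_def mat_fun_eq[OF spec_decomp_smult[OF sV]] using mtrace_mult_conj_diag_real[OF Vc \<tau>c]
    by (simp add: comp_def)
  also have "\<dots> = complex_of_real (\<Sum>l<L. ln (c * q l) * (\<Sum>i<L. p i * w i l))"
    using t by (simp add: of_real_sum)
  finally have cross: "Re (mtrace (\<tau> * mat_log L (complex_of_real c \<cdot>\<^sub>m \<sigma>)))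
      = (\<Sum>l<L. ln (c * q l) * (\<Sum>i<L. p i * w i l))" by simp
  have kernel: "(\<Sum>i<L. p i * w i l) = 0" if l: "l < L" and ql: "q l = 0" for l
  proof -
    have "\<sigma> *\<^sub>v col V l = 0\<^sub>v L"
      using unitary_conj_diag_real_mult_col[OF V \<sigma>eq l] ql Vc by (auto intro!: eq_vecI)
    hence "qform \<tau> (col V l) = 0" using supp Vc l by simp
    hence "(adj V * \<tau> * V) $$ (l,l) = 0" using diag_adj_mult_mult_qform[OF Vc \<tau>c l] by simp
    thus ?thesis using t[OF l] by (metis of_real_eq_0_iff)
  qed
  have "- ln c \<le> (\<Sum>i<L. p i * ln (p i)) - (\<Sum>l<L. ln (c * q l) * (\<Sum>i<L. p i * w i l))"
    using klein_weighted_sum_le[OF density_spec_decomp_eigenvalues[OF \<tau> sU] density_spec_decomp_eigenvalues[OF \<sigma> sV]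
        _ _ _ kernel c] unitary_sum_cmod_sq[OF W] by (simp add: w_def)
  moreover have "vn_entropy L \<tau> = - (\<Sum>i<L. p i * ln (p i))"
    using mtrace_mult_mat_log_self[OF sU] by (simp add: vn_entropy_def)
  ultimately show ?thesis using cross by linarith
qed

lemma block_vec_zero: "block_vec K L k (0\<^sub>v L) = 0\<^sub>v (K*L)"
  by (rule eq_vecI) (auto simp: block_vec_def index_pair_bounds)

lemma qform_ptrace1_kernel:
  assumes \<rho>: "\<rho> \<in> carrier_mat (K*L) (K*L)" and S: "S \<in> carrier_mat L L"
    and supp: "\<forall>v \<in> carrier_vec (K*L). tensor_mat (1\<^sub>m K) S *\<^sub>v v = 0\<^sub>v (K*L) \<longrightarrow> \<rho> *\<^sub>v v = 0\<^sub>v (K*L)"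
    and v: "v \<in> carrier_vec L" and Sv: "S *\<^sub>v v = 0\<^sub>v L"
  shows "qform (ptrace1 K L \<rho>) v = 0"
proof -
  have "qform \<rho> (block_vec K L k v) = 0" if "k < K" for k
  proof (rule qform_kernel[OF \<rho> block_vec_carrier])
    show "\<rho> *\<^sub>v block_vec K L k v = 0\<^sub>v (K*L)"
      using supp tensor_one_mult_block_vec[OF S v that] Sv block_vec_zero by simp
  qed
  thus ?thesis using qform_ptrace1[OF \<rho> v] by simp
qed

lemma adj_smult: "adj (c \<cdot>\<^sub>m A) = cnj c \<cdot>\<^sub>m adj A"
  by (rule eq_matI) auto

lemma smult_mult_mat_vec_zero:
  assumes "\<sigma> \<in> carrier_mat n n" "v \<in> carrier_vec n" "\<sigma> *\<^sub>v v = 0\<^sub>v n"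
  shows "(c \<cdot>\<^sub>m \<sigma>) *\<^sub>v v = 0\<^sub>v n"
proof -
  have "((c \<cdot>\<^sub>m \<sigma>) *\<^sub>v v) $ i = 0" if i: "i < n" for i
  proof -
    have "((c \<cdot>\<^sub>m \<sigma>) *\<^sub>v v) $ i = c * (\<sigma> *\<^sub>v v) $ i"
      using assms(1,2) i by (simp add: index_mult_mat_vec_sum[of _ n n] sum_distrib_left ac_simps del: index_mult_mat_vec)
    thus ?thesis using assms(3) i by simp
  qed
  thus ?thesis using assms(1) by (intro eq_vecI) auto
qed

text \<open>The cross term \<open>tr \<rho> log (1 \<otimes> c \<sigma>)\<close> only sees the marginal \<open>\<rho>\<^sub>L\<close>, to which Klein's inequality
  applies.\<close>
lemma rel_entropy_tensor_one_ge:
  assumes \<rho>: "density_mat (K*L) \<rho>" and \<sigma>: "density_mat L \<sigma>" and c: "c > 0"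
  shows "ereal (- ln c - cond_entropy K L \<rho>) \<le> rel_entropy (K*L) \<rho> (tensor_mat (1\<^sub>m K) (complex_of_real c \<cdot>\<^sub>m \<sigma>))"
proof (cases "\<forall>v \<in> carrier_vec (K*L). tensor_mat (1\<^sub>m K) (complex_of_real c \<cdot>\<^sub>m \<sigma>) *\<^sub>v v = 0\<^sub>v (K*L) \<longrightarrow> \<rho> *\<^sub>v v = 0\<^sub>v (K*L)")
  case False
  hence "rel_entropy (K*L) \<rho> (tensor_mat (1\<^sub>m K) (complex_of_real c \<cdot>\<^sub>m \<sigma>)) = \<infinity>"
    unfolding rel_entropy_def by (simp only: if_False)
  thus ?thesis by simp
next
  case supp: True
  define \<tau> where "\<tau> = ptrace1 K L \<rho>"
  define S where "S = complex_of_real c \<cdot>\<^sub>m \<sigma>"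
  have \<rho>c: "\<rho> \<in> carrier_mat (K*L) (K*L)" and \<sigma>c: "\<sigma> \<in> carrier_mat L L"
    using \<rho> \<sigma> by (auto simp: density_mat_def psd_mat_def hermitian_mat_def)
  have Sc: "S \<in> carrier_mat L L" unfolding S_def using \<sigma>c by simp
  have hS: "hermitian_mat L S"
    using \<sigma> Sc by (simp add: S_def density_mat_def psd_mat_def hermitian_mat_def adj_smult)
  have \<tau>: "density_mat L \<tau>"
    using \<rho> psd_ptrace1 mtrace_ptrace1[OF \<rho>c] by (simp add: density_mat_def \<tau>_def)
  have klein: "vn_entropy L \<tau> - ln c \<le> - Re (mtrace (\<tau> * mat_log L S))"
    unfolding S_def
  proof (rule klein_inequality[OF \<tau> \<sigma> c])
    fix v assume v: "v \<in> carrier_vec L" and "\<sigma> *\<^sub>v v = 0\<^sub>v L"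
    hence "S *\<^sub>v v = 0\<^sub>v L" unfolding S_def using smult_mult_mat_vec_zero \<sigma>c by blast
    thus "qform \<tau> v = 0" unfolding \<tau>_def using qform_ptrace1_kernel[OF \<rho>c Sc supp[folded S_def] v] by simp
  qed
  have log\<rho>: "mat_log (K*L) \<rho> \<in> carrier_mat (K*L) (K*L)"
    using mat_fun_carrier \<rho> by (auto simp: mat_log_def density_mat_def psd_mat_def)
  have logS: "mat_log L S \<in> carrier_mat L L"
    using mat_fun_carrier[OF hS] by (simp add: mat_log_def)
  have logT: "tensor_mat (1\<^sub>m K) (mat_log L S) \<in> carrier_mat (K*L) (K*L)" using logS by simp
  have "mtrace (\<rho> * (mat_log (K*L) \<rho> - mat_log (K*L) (tensor_mat (1\<^sub>m K) S)))
      = mtrace (\<rho> * mat_log (K*L) \<rho> - \<rho> * tensor_mat (1\<^sub>m K) (mat_log L S))"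
    using mat_fun_tensor_one[OF hS] mult_minus_distrib_mat[OF \<rho>c log\<rho> logT] by (simp add: mat_log_def)
  also have "\<dots> = mtrace (\<rho> * mat_log (K*L) \<rho>) - mtrace (\<rho> * tensor_mat (1\<^sub>m K) (mat_log L S))"
    using \<rho>c log\<rho> logT by (intro mtrace_minus) auto
  also have "\<dots> = mtrace (\<rho> * mat_log (K*L) \<rho>) - mtrace (\<tau> * mat_log L S)"
    unfolding \<tau>_def mtrace_mult_tensor_one[OF \<rho>c logS] ..
  finally have "mtrace (\<rho> * (mat_log (K*L) \<rho> - mat_log (K*L) (tensor_mat (1\<^sub>m K) S)))
      = mtrace (\<rho> * mat_log (K*L) \<rho>) - mtrace (\<tau> * mat_log L S)" .
  thus ?thesis
    using supp klein unfolding rel_entropy_def cond_entropy_def vn_entropy_def S_def \<tau>_def by simp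
qed

section \<open>Channels and maximally entangled states\<close>

lemma index_pair_div[simp]: "(q::nat) < n \<Longrightarrow> (p * n + q) div n = p"
  by simp

lemma index_pair_mod[simp]: "(q::nat) < n \<Longrightarrow> (p * n + q) mod n = q"
  by simp

lemma if_zero_mult[simp]: "(if P then a else 0) * (b::'a::mult_zero) = (if P then a * b else 0)"
  by simp

lemma mult_if_zero[simp]: "(b::'a::mult_zero) * (if P then a else 0) = (if P then b * a else 0)"
  by simp

lemma id_tensor_dims: "dim_row (id_tensor_map k din dout N X) = k*dout" "dim_col (id_tensor_map k din dout N X) = k*dout"
  by (auto simp: id_tensor_map_def)

definition mat_block :: "nat \<Rightarrow> complex mat \<Rightarrow> nat \<Rightarrow> nat \<Rightarrow> complex mat" where
  "mat_block n W r s = mat n n (\<lambda>(p,q). W $$ (r*n + p, s*n + q))"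

lemma index_id_tensor_map:
  assumes "i < k*dout" "j < k*dout"
  shows "id_tensor_map k din dout N X $$ (i,j)
    = N (mat_block din X (i div dout) (j div dout)) $$ (i mod dout, j mod dout)"
  using assms by (simp add: id_tensor_map_def mat_block_def)

lemma channel_carrier:
  assumes "quantum_channel din dout N" "X \<in> carrier_mat din din"
  shows "N X \<in> carrier_mat dout dout"
  using assms by (simp add: quantum_channel_def completely_positive_def linear_map_def)

lemma mtrace_id_tensor_map_channel:
  assumes N: "quantum_channel din dout N" and W: "W \<in> carrier_mat (k*din) (k*din)"
  shows "mtrace (id_tensor_map k din dout N W) = mtrace W"
proof -
  define blk where "blk r = mat_block din W r r" for r
  have bc: "\<And>r. blk r \<in> carrier_mat din din" by (simp add: blk_def mat_block_def)
  have "mtrace (id_tensor_map k din dout N W) = (\<Sum>i<k*dout. N (blk (i div dout)) $$ (i mod dout, i mod dout))"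
    by (simp add: mtrace_def id_tensor_map_def blk_def mat_block_def)
  also have "\<dots> = (\<Sum>r<k. \<Sum>x<dout. N (blk r) $$ (x,x))"
    by (subst sum_lessThan_mult) (intro sum.cong refl, auto)
  also have "\<dots> = (\<Sum>r<k. mtrace (N (blk r)))"
    by (intro sum.cong refl) (simp add: mtrace_eq_sum[OF channel_carrier[OF N bc]])
  also have "\<dots> = (\<Sum>r<k. mtrace (blk r))"
    using N bc by (simp add: quantum_channel_def)
  also have "\<dots> = (\<Sum>r<k. \<Sum>p<din. W $$ (r*din+p, r*din+p))"
    by (simp add: mtrace_def blk_def mat_block_def)
  also have "\<dots> = mtrace W" using W by (simp add: mtrace_def sum_lessThan_mult)
  finally show ?thesis .
qed

lemma mtrace_tensor:
  assumes A: "A \<in> carrier_mat m m" and B: "B \<in> carrier_mat n n"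
  shows "mtrace (tensor_mat A B) = mtrace A * mtrace B"
proof -
  have "mtrace (tensor_mat A B) = (\<Sum>i<m*n. A $$ (i div n, i div n) * B $$ (i mod n, i mod n))"
    using A B by (simp add: mtrace_def tensor_mat_def)
  also have "\<dots> = (\<Sum>p<m. \<Sum>q<n. A $$ (p,p) * B $$ (q,q))"
    by (subst sum_lessThan_mult) (intro sum.cong refl, auto)
  also have "\<dots> = mtrace A * mtrace B" using A B by (simp add: mtrace_def sum_product)
  finally show ?thesis .
qed

lemma linear_map_zero:
  assumes L: "linear_map din dout N"
  shows "N (0\<^sub>m din din) = 0\<^sub>m dout dout"
proof -
  have c: "N (0\<^sub>m din din) \<in> carrier_mat dout dout" using L by (simp add: linear_map_def)
  have lin: "\<And>X Y c. X \<in> carrier_mat din din \<Longrightarrow> Y \<in> carrier_mat din din \<Longrightarrow> N (c \<cdot>\<^sub>m X + Y) = c \<cdot>\<^sub>m N X + N Y"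
    using L unfolding linear_map_def by blast
  have "N (1 \<cdot>\<^sub>m 0\<^sub>m din din + 0\<^sub>m din din) = 1 \<cdot>\<^sub>m N (0\<^sub>m din din) + N (0\<^sub>m din din)"
    using lin[OF zero_carrier_mat zero_carrier_mat] .
  moreover have "1 \<cdot>\<^sub>m N (0\<^sub>m din din) = N (0\<^sub>m din din)" by (rule eq_matI) auto
  ultimately have e: "N (0\<^sub>m din din) = N (0\<^sub>m din din) + N (0\<^sub>m din din)" using c by simp
  show ?thesis
  proof (rule eq_matI)
    fix i j assume "i < dim_row (0\<^sub>m dout dout :: complex mat)" "j < dim_col (0\<^sub>m dout dout :: complex mat)"
    hence ij: "i < dout" "j < dout" by auto
    have "N (0\<^sub>m din din) $$ (i,j) = (N (0\<^sub>m din din) + N (0\<^sub>m din din)) $$ (i,j)" using e by simp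
    also have "\<dots> = N (0\<^sub>m din din) $$ (i,j) + N (0\<^sub>m din din) $$ (i,j)" using c ij by simp
    finally show "N (0\<^sub>m din din) $$ (i,j) = 0\<^sub>m dout dout $$ (i,j)" using ij by simp
  qed (use c in auto)
qed

lemma linear_map_smult:
  assumes L: "linear_map din dout N" and X: "X \<in> carrier_mat din din"
  shows "N (c \<cdot>\<^sub>m X) = c \<cdot>\<^sub>m N X"
proof -
  have c: "N X \<in> carrier_mat dout dout" using L X by (simp add: linear_map_def)
  have lin: "\<And>X Y c. X \<in> carrier_mat din din \<Longrightarrow> Y \<in> carrier_mat din din \<Longrightarrow> N (c \<cdot>\<^sub>m X + Y) = c \<cdot>\<^sub>m N X + N Y"
    using L unfolding linear_map_def by blast
  have "N (c \<cdot>\<^sub>m X + 0\<^sub>m din din) = c \<cdot>\<^sub>m N X + N (0\<^sub>m din din)"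
    using lin[OF X zero_carrier_mat] .
  also have "\<dots> = c \<cdot>\<^sub>m N X" using linear_map_zero[OF L] c by simp
  finally show ?thesis using X by simp
qed

lemma max_ent_real_outer:
  assumes d: "d > 0"
  shows "max_ent d = mat (d*d) (d*d) (\<lambda>(i,j). complex_of_real
      ((if i div d = i mod d then 1 / sqrt d else 0) * (if j div d = j mod d then 1 / sqrt d else 0)))"
proof -
  have "(1 / sqrt (real d)) * (1 / sqrt (real d)) = 1 / real d" using d
    by (simp add: real_sqrt_mult[symmetric] del: real_sqrt_mult)
  thus ?thesis unfolding max_ent_def by (intro eq_matI) (auto simp: of_real_divide)
qed

lemma max_ent_psd: assumes "d > 0" shows "psd_mat (d*d) (max_ent d)"
  unfolding max_ent_real_outer[OF assms] by (rule psd_real_outer)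

lemma max_ent_carrier[simp]: "max_ent d \<in> carrier_mat (d*d) (d*d)"
  by (simp add: max_ent_def)

lemma max_ent_dims[simp]: "dim_row (max_ent d) = d*d" "dim_col (max_ent d) = d*d"
  by (auto simp: max_ent_def)

lemma max_ent_trace:
  assumes d: "d > 0"
  shows "mtrace (max_ent d) = 1"
proof -
  have "mtrace (max_ent d) = (\<Sum>i<d*d. if i div d = i mod d then 1 / of_nat d else 0)"
    by (simp add: mtrace_def max_ent_def)
  also have "\<dots> = (\<Sum>p<d. \<Sum>q<d. if p = q then 1 / of_nat d else (0::complex))"
    by (subst sum_lessThan_mult) (intro sum.cong refl, auto)
  also have "\<dots> = (\<Sum>p<d. 1 / of_nat d)" by simp
  also have "\<dots> = 1" using d by simp
  finally show ?thesis .
qed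

lemma max_ent_density: "d > 0 \<Longrightarrow> density_mat (d*d) (max_ent d)"
  using max_ent_psd max_ent_trace by (simp add: density_mat_def)

lemma max_ent_index:
  assumes "x < d" "y < d" "x' < d" "y' < d"
  shows "max_ent d $$ (x*d+y, x'*d+y') = (if x = y \<and> x' = y' then 1 / of_nat d else 0)"
proof -
  have "x*d+y < d*d" "x'*d+y' < d*d" using index_pair_less assms by auto
  thus ?thesis using assms by (simp add: max_ent_def)
qed

lemma psd_tensor_max_ent:
  assumes ap: "ap > 0" and bp: "bp > 0"
  shows "psd_mat (ap*ap*(bp*bp)) (tensor_mat (max_ent ap) (max_ent bp))"
proof -
  define ha where "ha = (\<lambda>i. if i div ap = i mod ap then 1 / sqrt ap else (0::real))"
  define hb where "hb = (\<lambda>i. if i div bp = i mod bp then 1 / sqrt bp else (0::real))"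
  define g where "g = (\<lambda>i. ha (i div (bp*bp)) * hb (i mod (bp*bp)))"
  have "tensor_mat (max_ent ap) (max_ent bp) = mat (ap*ap*(bp*bp)) (ap*ap*(bp*bp)) (\<lambda>(i,j). complex_of_real (g i * g j))"
  proof (rule eq_matI)
    fix i j assume "i < dim_row (mat (ap*ap*(bp*bp)) (ap*ap*(bp*bp)) (\<lambda>(i,j). complex_of_real (g i * g j)))"
      "j < dim_col (mat (ap*ap*(bp*bp)) (ap*ap*(bp*bp)) (\<lambda>(i,j). complex_of_real (g i * g j)))"
    hence ij: "i < ap*ap*(bp*bp)" "j < ap*ap*(bp*bp)" by auto
    note si = index_pair_split[OF ij(1)] and sj = index_pair_split[OF ij(2)]
    have "tensor_mat (max_ent ap) (max_ent bp) $$ (i,j) = max_ent ap $$ (i div (bp*bp), j div (bp*bp)) * max_ent bp $$ (i mod (bp*bp), j mod (bp*bp))"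
      using index_tensor_mat[of i "max_ent ap" "max_ent bp" j] ij by simp
    also have "\<dots> = complex_of_real (ha (i div (bp*bp)) * ha (j div (bp*bp))) * complex_of_real (hb (i mod (bp*bp)) * hb (j mod (bp*bp)))"
      unfolding max_ent_real_outer[OF ap] max_ent_real_outer[OF bp] ha_def hb_def using si sj by simp
    also have "\<dots> = complex_of_real (g i * g j)" unfolding g_def by (simp add: ac_simps)
    finally show "tensor_mat (max_ent ap) (max_ent bp) $$ (i,j) = mat (ap*ap*(bp*bp)) (ap*ap*(bp*bp)) (\<lambda>(i,j). complex_of_real (g i * g j)) $$ (i,j)"
      using ij by simp
  qed auto
  thus ?thesis using psd_real_outer by simp
qed

section \<open>Reordering tensor factors\<close>

lemma permutation_mat_unitary_conj:
  assumes Qc: "Q \<in> carrier_mat N N" and pi: "\<And>i. i < N \<Longrightarrow> \<pi> i < N" and inj: "inj_on \<pi> {..<N}"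
    and Qe: "\<And>i j. i < N \<Longrightarrow> j < N \<Longrightarrow> Q $$ (i,j) = (if j = \<pi> i then 1 else 0)"
  shows "unitary_mat N Q"
    and "\<And>M i j. M \<in> carrier_mat N N \<Longrightarrow> i < N \<Longrightarrow> j < N \<Longrightarrow> (Q * M * adj Q) $$ (i,j) = M $$ (\<pi> i, \<pi> j)"
proof -
  have bij: "bij_betw \<pi> {..<N} {..<N}"
    unfolding bij_betw_def using inj endo_inj_surj[of "{..<N}" \<pi>] pi by auto
  have QQ: "Q * adj Q = 1\<^sub>m N"
  proof (rule eq_matI)
    fix i j assume "i < dim_row (1\<^sub>m N)" "j < dim_col (1\<^sub>m N)"
    hence ij: "i < N" "j < N" by auto
    have "(Q * adj Q) $$ (i,j) = (\<Sum>k<N. Q $$ (i,k) * cnj (Q $$ (j,k)))" using index_mult_adj[OF Qc ij] .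
    also have "\<dots> = (\<Sum>k<N. if k = \<pi> i then (if k = \<pi> j then 1 else 0) else 0)"
      using ij by (intro sum.cong refl) (auto simp: Qe)
    also have "\<dots> = (if \<pi> j = \<pi> i then 1 else 0)" using pi[OF ij(1)] by simp
    also have "\<dots> = (if i = j then 1 else 0)" using inj ij by (auto dest: inj_onD)
    finally show "(Q * adj Q) $$ (i,j) = 1\<^sub>m N $$ (i,j)" using ij by simp
  qed (use Qc in \<open>auto intro: adj_carrier\<close>)
  have QQ': "adj Q * Q = 1\<^sub>m N"
  proof (rule eq_matI)
    fix i j assume "i < dim_row (1\<^sub>m N)" "j < dim_col (1\<^sub>m N)"
    hence ij: "i < N" "j < N" by auto
    have "(adj Q * Q) $$ (i,j) = (\<Sum>k<N. cnj (Q $$ (k,i)) * Q $$ (k,j))" using index_adj_mult[OF Qc ij] .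
    also have "\<dots> = (\<Sum>k<N. if i = \<pi> k then (if j = \<pi> k then 1 else 0) else 0)"
      using ij by (intro sum.cong refl) (auto simp: Qe)
    also have "\<dots> = (\<Sum>k<N. if i = k then (if j = k then 1 else 0) else 0)"
      using sum.reindex_bij_betw[OF bij, of "\<lambda>k. if i = k then (if j = k then 1 else 0) else (0::complex)"] by simp
    also have "\<dots> = (if i = j then 1 else 0)" using ij by simp
    finally show "(adj Q * Q) $$ (i,j) = 1\<^sub>m N $$ (i,j)" using ij by simp
  qed (use Qc in \<open>auto intro: adj_carrier\<close>)
  show "unitary_mat N Q" using QQ QQ' Qc by (simp add: unitary_mat_def)
  fix M :: "complex mat" and i j assume M: "M \<in> carrier_mat N N" and ij: "i < N" "j < N"
  have aQ: "adj Q \<in> carrier_mat N N" using Qc adj_carrier by blast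
  have "(Q * M * adj Q) $$ (i,j) = (adj (adj Q) * M * adj Q) $$ (i,j)" by simp
  also have "\<dots> = (\<Sum>a<N. \<Sum>b<N. cnj (adj Q $$ (a,i)) * M $$ (a,b) * adj Q $$ (b,j))"
    using index_adj_mult_mult[OF aQ M ij] .
  also have "\<dots> = (\<Sum>a<N. \<Sum>b<N. if a = \<pi> i then (if b = \<pi> j then M $$ (a,b) else 0) else 0)"
    using ij Qc by (intro sum.cong refl) (auto simp: Qe)
  also have "\<dots> = (\<Sum>a<N. if a = \<pi> i then (\<Sum>b<N. if b = \<pi> j then M $$ (a,b) else 0) else 0)"
    by (intro sum.cong refl) simp
  also have "\<dots> = M $$ (\<pi> i, \<pi> j)" using pi ij by simp
  finally show "(Q * M * adj Q) $$ (i,j) = M $$ (\<pi> i, \<pi> j)" .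
qed

text \<open>Both reorderings used in \<open>apply_bipartite\<close> and \<open>choi_state\<close> have this shape: identities on the
  outer factors and a swap of the two middle ones.\<close>
definition reorder_mat :: "nat \<Rightarrow> nat \<Rightarrow> nat \<Rightarrow> nat \<Rightarrow> complex mat" where
  "reorder_mat n1 m n n4 = tensor_mat (tensor_mat (1\<^sub>m n1) (swap_mat m n)) (1\<^sub>m n4)"

definition reorder_perm :: "nat \<Rightarrow> nat \<Rightarrow> nat \<Rightarrow> nat \<Rightarrow> nat \<Rightarrow> nat" where
  "reorder_perm n1 m n n4 i = (let w = i mod n4; p = i div n4; x = p div (n*m); r = p mod (n*m); y = r div m; z = r mod m
     in (x*(m*n) + (z*n+y))*n4 + w)"

lemma swap_mat_dims[simp]: "dim_row (swap_mat m n) = n*m" "dim_col (swap_mat m n) = m*n"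
  by (auto simp: swap_mat_def)

lemma reorder_mat_dims[simp]: "dim_row (reorder_mat n1 m n n4) = n1*(n*m)*n4" "dim_col (reorder_mat n1 m n n4) = n1*(m*n)*n4"
  by (auto simp: reorder_mat_def)

lemma index_reorder_mat:
  assumes "x < n1" "y < n" "z < m" "w < n4" "x' < n1" "y' < n" "z' < m" "w' < n4"
  shows "reorder_mat n1 m n n4 $$ ((x*(n*m) + (y*m+z))*n4 + w, (x'*(m*n) + (z'*n+y'))*n4 + w')
     = (if x = x' \<and> y = y' \<and> z = z' \<and> w = w' then 1 else 0)"
proof -
  have r1: "y*m+z < n*m" using index_pair_less[OF assms(2,3)] .
  have c1: "z'*n+y' < m*n" using index_pair_less[OF assms(7,6)] .
  have r2: "x*(n*m) + (y*m+z) < n1*(n*m)" using index_pair_less[OF assms(1) r1] .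
  have c2: "x'*(m*n) + (z'*n+y') < n1*(m*n)" using index_pair_less[OF assms(5) c1] .
  have r3: "(x*(n*m) + (y*m+z))*n4 + w < n1*(n*m)*n4" using index_pair_less[OF r2 assms(4)] .
  have c3: "(x'*(m*n) + (z'*n+y'))*n4 + w' < n1*(m*n)*n4" using index_pair_less[OF c2 assms(8)] .
  have sw: "swap_mat m n $$ (y*m+z, z'*n+y') = (if y = y' \<and> z = z' then 1 else 0)"
    using r1 c1 assms by (simp add: swap_mat_def)
  have t2: "tensor_mat (1\<^sub>m n1) (swap_mat m n) $$ (x*(n*m) + (y*m+z), x'*(m*n) + (z'*n+y'))
      = (if x = x' then 1 else 0) * (if y = y' \<and> z = z' then 1 else 0)"
    using index_tensor_mat[of "x*(n*m) + (y*m+z)" "1\<^sub>m n1" "swap_mat m n" "x'*(m*n) + (z'*n+y')"] r2 c2 r1 c1 assms sw by simp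
  have "reorder_mat n1 m n n4 $$ ((x*(n*m) + (y*m+z))*n4 + w, (x'*(m*n) + (z'*n+y'))*n4 + w')
     = tensor_mat (1\<^sub>m n1) (swap_mat m n) $$ (x*(n*m) + (y*m+z), x'*(m*n) + (z'*n+y')) * 1\<^sub>m n4 $$ (w, w')"
    unfolding reorder_mat_def using index_tensor_mat[of "(x*(n*m) + (y*m+z))*n4 + w" "tensor_mat (1\<^sub>m n1) (swap_mat m n)" "1\<^sub>m n4"
        "(x'*(m*n) + (z'*n+y'))*n4 + w'"] r3 c3 assms by simp
  thus ?thesis using t2 assms by simp
qed

lemma index_quad_split:
  assumes "(i::nat) < n1*(n*m)*n4"
  shows "\<exists>x y z w. x < n1 \<and> y < n \<and> z < m \<and> w < n4 \<and> i = (x*(n*m) + (y*m+z))*n4 + w"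
proof -
  note s1 = index_pair_split[OF assms]
  note s2 = index_pair_split[OF conjunct1[OF s1]]
  note s3 = index_pair_split[OF conjunct1[OF conjunct2[OF s2]]]
  show ?thesis
    by (rule exI[of _ "i div n4 div (n*m)"], rule exI[of _ "i div n4 mod (n*m) div m"],
        rule exI[of _ "i div n4 mod (n*m) mod m"], rule exI[of _ "i mod n4"]) (use s1 s2 s3 in auto)
qed

lemma reorder_perm_index:
  assumes "x < n1" "y < n" "z < m" "w < n4"
  shows "reorder_perm n1 m n n4 ((x*(n*m) + (y*m+z))*n4 + w) = (x*(m*n) + (z*n+y))*n4 + w"
proof -
  have r1: "y*m+z < n*m" using index_pair_less[OF assms(2,3)] .
  show ?thesis using assms r1 by (simp add: reorder_perm_def Let_def)
qed

lemma reorder_mat_permutation: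
  assumes N: "N = n1*(n*m)*n4"
  shows "reorder_mat n1 m n n4 \<in> carrier_mat N N"
    and "\<And>i. i < N \<Longrightarrow> reorder_perm n1 m n n4 i < N"
    and "inj_on (reorder_perm n1 m n n4) {..<N}"
    and "\<And>i j. i < N \<Longrightarrow> j < N \<Longrightarrow> reorder_mat n1 m n n4 $$ (i,j) = (if j = reorder_perm n1 m n n4 i then 1 else 0)"
proof -
  have NN: "n1*(m*n)*n4 = N" unfolding N by (simp only: mult.commute[of m n])
  show "reorder_mat n1 m n n4 \<in> carrier_mat N N" unfolding carrier_mat_def reorder_mat_dims NN by (simp add: N)
  show lt: "reorder_perm n1 m n n4 i < N" if "i < N" for i
  proof -
    have "i < n1*(n*m)*n4" using that N by simp
    then obtain x y z w where c: "x < n1" "y < n" "z < m" "w < n4" "i = (x*(n*m) + (y*m+z))*n4 + w"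
      using index_quad_split by blast
    have "(x*(m*n) + (z*n+y))*n4 + w < n1*(m*n)*n4"
      using index_pair_less[OF index_pair_less[OF c(1) index_pair_less[OF c(3) c(2)]] c(4)] .
    thus ?thesis using reorder_perm_index[OF c(1-4)] c(5) NN by simp
  qed
  show "inj_on (reorder_perm n1 m n n4) {..<N}"
  proof (rule inj_onI)
    fix i j assume "i \<in> {..<N}" "j \<in> {..<N}" and e: "reorder_perm n1 m n n4 i = reorder_perm n1 m n n4 j"
    have "i < n1*(n*m)*n4" "j < n1*(n*m)*n4" using \<open>i \<in> {..<N}\<close> \<open>j \<in> {..<N}\<close> N by auto
    then obtain x y z w x' y' z' w' where c: "x < n1" "y < n" "z < m" "w < n4" "i = (x*(n*m) + (y*m+z))*n4 + w"
      and c': "x' < n1" "y' < n" "z' < m" "w' < n4" "j = (x'*(n*m) + (y'*m+z'))*n4 + w'"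
      using index_quad_split by meson
    have "(x*(m*n) + (z*n+y))*n4 + w = (x'*(m*n) + (z'*n+y'))*n4 + w'"
      using e reorder_perm_index[OF c(1-4)] reorder_perm_index[OF c'(1-4)] c(5) c'(5) by simp
    hence "x = x' \<and> z = z' \<and> y = y' \<and> w = w'"
      using index_pair_eq_iff[OF c(4) c'(4)] index_pair_eq_iff[OF index_pair_less[OF c(3) c(2)] index_pair_less[OF c'(3) c'(2)]] index_pair_eq_iff[OF c(2) c'(2)]
      by auto
    thus "i = j" using c(5) c'(5) by simp
  qed
  show "reorder_mat n1 m n n4 $$ (i,j) = (if j = reorder_perm n1 m n n4 i then 1 else 0)" if "i < N" "j < N" for i j
  proof -
    have "i < n1*(n*m)*n4" using that N by simp
    then obtain x y z w where c: "x < n1" "y < n" "z < m" "w < n4" "i = (x*(n*m) + (y*m+z))*n4 + w"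
      using index_quad_split by blast
    have "j < n1*(m*n)*n4" using that NN by simp
    then obtain x' z' y' w' where c': "x' < n1" "z' < m" "y' < n" "w' < n4" "j = (x'*(m*n) + (z'*n+y'))*n4 + w'"
      using index_quad_split by blast
    have "reorder_mat n1 m n n4 $$ (i,j) = (if x = x' \<and> y = y' \<and> z = z' \<and> w = w' then 1 else 0)"
      unfolding c(5) c'(5) using index_reorder_mat[OF c(1-4) c'(1) c'(3) c'(2) c'(4)] .
    moreover have "(j = reorder_perm n1 m n n4 i) = (x = x' \<and> y = y' \<and> z = z' \<and> w = w')"
    proof -
      have "(j = reorder_perm n1 m n n4 i) = ((x'*(m*n) + (z'*n+y'))*n4 + w' = (x*(m*n) + (z*n+y))*n4 + w)"
        using reorder_perm_index[OF c(1-4)] c(5) c'(5) by simp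
      also have "\<dots> = (x' = x \<and> z' = z \<and> y' = y \<and> w' = w)"
        using index_pair_eq_iff[OF c'(4) c(4)] index_pair_eq_iff[OF index_pair_less[OF c'(2) c'(3)] index_pair_less[OF c(3) c(2)]] index_pair_eq_iff[OF c'(3) c(2)]
        by auto
      finally show ?thesis by auto
    qed
    ultimately show ?thesis by simp
  qed
qed

lemma apply_bipartite_max_ent_density:
  fixes ap bp a b :: nat and N :: "complex mat \<Rightarrow> complex mat"
  assumes ap: "ap > 0" and bp: "bp > 0" and Nc: "quantum_channel (ap*bp) (a*b) N"
  shows "psd_mat (ap*bp*(a*b)) (apply_bipartite ap bp ap bp a b N (max_ent ap) (max_ent bp))"
    and "mtrace (apply_bipartite ap bp ap bp a b N (max_ent ap) (max_ent bp)) = 1"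
proof -
  define P where "P = reorder_mat ap ap bp bp"
  define T where "T = tensor_mat (max_ent ap) (max_ent bp)"
  define N0 where "N0 = ap*(bp*ap)*bp"
  note gp = reorder_mat_permutation[OF N0_def, folded P_def]
  have e1: "ap*ap*(bp*bp) = N0" "ap*bp*(ap*bp) = N0" by (simp_all add: N0_def ac_simps)
  have Tp: "psd_mat N0 T" using psd_tensor_max_ent[OF ap bp] e1 unfolding T_def by simp
  have Tc: "T \<in> carrier_mat N0 N0" using Tp by (simp add: psd_mat_def hermitian_mat_def)
  have Pu: "unitary_mat N0 P" using permutation_mat_unitary_conj(1)[OF gp] .
  have Wp: "psd_mat N0 (P * T * adj P)" using psd_conj[OF Tp gp(1)] .
  have AB: "apply_bipartite ap bp ap bp a b N (max_ent ap) (max_ent bp) = id_tensor_map (ap*bp) (ap*bp) (a*b) N (P * T * adj P)"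
    unfolding apply_bipartite_def Let_def P_def T_def reorder_mat_def ..
  have cp: "\<And>k X. psd_mat (k*(ap*bp)) X \<Longrightarrow> psd_mat (k*(a*b)) (id_tensor_map k (ap*bp) (a*b) N X)"
    using Nc by (simp add: quantum_channel_def completely_positive_def)
  show "psd_mat (ap*bp*(a*b)) (apply_bipartite ap bp ap bp a b N (max_ent ap) (max_ent bp))"
    unfolding AB using cp[of "ap*bp" "P * T * adj P"] Wp e1 by simp
  have Wc: "P * T * adj P \<in> carrier_mat (ap*bp*(ap*bp)) (ap*bp*(ap*bp))"
    using Wp e1 by (simp add: psd_mat_def hermitian_mat_def)
  have "mtrace (apply_bipartite ap bp ap bp a b N (max_ent ap) (max_ent bp)) = mtrace (P * T * adj P)"
    unfolding AB using mtrace_id_tensor_map_channel[OF Nc Wc] .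
  also have "\<dots> = mtrace T" using mtrace_unitary_conj[OF Pu Tc] .
  also have "\<dots> = mtrace (max_ent ap) * mtrace (max_ent bp)" unfolding T_def using mtrace_tensor[OF max_ent_carrier max_ent_carrier] .
  also have "\<dots> = 1" using max_ent_trace ap bp by simp
  finally show "mtrace (apply_bipartite ap bp ap bp a b N (max_ent ap) (max_ent bp)) = 1" .
qed

lemma id_tensor_map_max_ent_density:
  fixes bp b :: nat and M :: "complex mat \<Rightarrow> complex mat"
  assumes bp: "bp > 0" and Mc: "quantum_channel bp b M"
  shows "psd_mat (bp*b) (id_tensor_map bp bp b M (max_ent bp))"
    and "mtrace (id_tensor_map bp bp b M (max_ent bp)) = 1"
proof -
  have cp: "\<And>k X. psd_mat (k*bp) X \<Longrightarrow> psd_mat (k*b) (id_tensor_map k bp b M X)"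
    using Mc by (simp add: quantum_channel_def completely_positive_def)
  show "psd_mat (bp*b) (id_tensor_map bp bp b M (max_ent bp))" using cp max_ent_psd[OF bp] by simp
  show "mtrace (id_tensor_map bp bp b M (max_ent bp)) = 1"
    using mtrace_id_tensor_map_channel[OF Mc max_ent_carrier] max_ent_trace[OF bp] by simp
qed

lemma index_reordered_max_ent_pair:
  fixes ap bp :: nat
  assumes ap: "ap > 0" and bp: "bp > 0"
    and c: "rA < ap" "rB < bp" "k < ap" "x < bp" "sA < ap" "sB < bp" "k' < ap" "y < bp"
  shows "(reorder_mat ap ap bp bp * tensor_mat (max_ent ap) (max_ent bp) * adj (reorder_mat ap ap bp bp))
           $$ ((rA*bp+rB)*(ap*bp) + (k*bp+x), (sA*bp+sB)*(ap*bp) + (k'*bp+y))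
       = (if rA = k \<and> sA = k' then 1 / of_nat ap else 0) * (if rB = x \<and> sB = y then 1 / of_nat bp else 0)"
proof -
  define N where "N = ap*(bp*ap)*bp"
  note gp = reorder_mat_permutation[OF N_def]
  have NN: "ap*ap*(bp*bp) = N" by (simp add: N_def ac_simps)
  have Tc: "tensor_mat (max_ent ap) (max_ent bp) \<in> carrier_mat N N"
    unfolding carrier_mat_def tensor_mat_dims max_ent_dims using NN by simp
  have i1: "(rA*bp+rB)*(ap*bp) + (k*bp+x) = (rA*(bp*ap) + (rB*ap+k))*bp + x" by (simp add: algebra_simps)
  have j1: "(sA*bp+sB)*(ap*bp) + (k'*bp+y) = (sA*(bp*ap) + (sB*ap+k'))*bp + y" by (simp add: algebra_simps)
  have iN: "(rA*(bp*ap) + (rB*ap+k))*bp + x < N" unfolding N_def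
    using index_pair_less[OF index_pair_less[OF c(1) index_pair_less[OF c(2) c(3)]] c(4)] .
  have jN: "(sA*(bp*ap) + (sB*ap+k'))*bp + y < N" unfolding N_def
    using index_pair_less[OF index_pair_less[OF c(5) index_pair_less[OF c(6) c(7)]] c(8)] .
  have gi: "reorder_perm ap ap bp bp ((rA*(bp*ap) + (rB*ap+k))*bp + x) = (rA*ap+k)*(bp*bp) + (rB*bp+x)"
    using reorder_perm_index[OF c(1) c(2) c(3) c(4)] by (simp add: algebra_simps)
  have gj: "reorder_perm ap ap bp bp ((sA*(bp*ap) + (sB*ap+k'))*bp + y) = (sA*ap+k')*(bp*bp) + (sB*bp+y)"
    using reorder_perm_index[OF c(5) c(6) c(7) c(8)] by (simp add: algebra_simps)
  have r1: "rA*ap+k < ap*ap" "sA*ap+k' < ap*ap" using index_pair_less c by auto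
  have r2: "rB*bp+x < bp*bp" "sB*bp+y < bp*bp" using index_pair_less c by auto
  have "(reorder_mat ap ap bp bp * tensor_mat (max_ent ap) (max_ent bp) * adj (reorder_mat ap ap bp bp))
           $$ ((rA*bp+rB)*(ap*bp) + (k*bp+x), (sA*bp+sB)*(ap*bp) + (k'*bp+y))
       = tensor_mat (max_ent ap) (max_ent bp) $$ ((rA*ap+k)*(bp*bp) + (rB*bp+x), (sA*ap+k')*(bp*bp) + (sB*bp+y))"
    unfolding i1 j1 using permutation_mat_unitary_conj(2)[OF gp(1) gp(2) gp(3) gp(4) Tc iN jN] gi gj by simp
  also have "\<dots> = max_ent ap $$ (rA*ap+k, sA*ap+k') * max_ent bp $$ (rB*bp+x, sB*bp+y)"
    using index_tensor_mat[of "(rA*ap+k)*(bp*bp) + (rB*bp+x)" "max_ent ap" "max_ent bp" "(sA*ap+k')*(bp*bp) + (sB*bp+y)"]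
      r1 r2 index_pair_less[OF r1(1) r2(1)] index_pair_less[OF r1(2) r2(2)]
    by (simp add: max_ent_def)
  also have "\<dots> = (if rA = k \<and> sA = k' then 1 / of_nat ap else 0) * (if rB = x \<and> sB = y then 1 / of_nat bp else 0)"
    using max_ent_index[of rA ap k sA k'] max_ent_index[of rB bp x sB y] c by simp
  finally show ?thesis .
qed

lemma ptrace1_reordered_max_ent_block:
  fixes ap bp :: nat
  assumes ap: "ap > 0" and bp: "bp > 0" and c: "rA < ap" "rB < bp" "sA < ap" "sB < bp"
  defines "W \<equiv> reorder_mat ap ap bp bp * tensor_mat (max_ent ap) (max_ent bp) * adj (reorder_mat ap ap bp bp)"
  shows "ptrace1 ap bp (mat_block (ap*bp) W (rA*bp+rB) (sA*bp+sB))
    = (if rA = sA then 1 / of_nat ap else 0) \<cdot>\<^sub>m mat_block bp (max_ent bp) rB sB"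
proof -
  define r where "r = rA*bp+rB"
  define s where "s = sA*bp+sB"
  define E where "E = mat_block bp (max_ent bp) rB sB"
  have Ec: "E \<in> carrier_mat bp bp" by (simp add: E_def mat_block_def)
  have "ptrace1 ap bp (mat_block (ap*bp) W r s) = (if rA = sA then 1 / of_nat ap else 0) \<cdot>\<^sub>m E"
  proof (rule eq_matI)
    fix x y assume "x < dim_row ((if rA = sA then 1 / of_nat ap else 0) \<cdot>\<^sub>m E)" "y < dim_col ((if rA = sA then 1 / of_nat ap else 0) \<cdot>\<^sub>m E)"
    hence xy: "x < bp" "y < bp" by (auto simp: E_def mat_block_def)
    have "ptrace1 ap bp (mat_block (ap*bp) W r s) $$ (x,y) = (\<Sum>k<ap. W $$ (r*(ap*bp) + (k*bp+x), s*(ap*bp) + (k*bp+y)))"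
      using xy index_pair_less by (simp add: ptrace1_index mat_block_def)
    also have "\<dots> = (\<Sum>k<ap. (if rA = k \<and> sA = k then 1 / of_nat ap else 0) * (if rB = x \<and> sB = y then 1 / of_nat bp else 0))"
      unfolding r_def s_def W_def
      using index_reordered_max_ent_pair[OF ap bp c(1) c(2) _ xy(1) c(3) c(4) _ xy(2)] by (intro sum.cong refl) auto
    also have "\<dots> = (if rA = sA then 1 / of_nat ap else 0) * (if rB = x \<and> sB = y then 1 / of_nat bp else (0::complex))"
    proof -
      have "(\<Sum>k<ap. (if rA = k \<and> sA = k then 1 / of_nat ap else (0::complex))) = (if rA = sA then 1 / of_nat ap else 0)"
        using c(1) by (cases "rA = sA") (auto intro!: sum.neutral)
      moreover have "(\<Sum>k<ap. (if rA = k \<and> sA = k then 1 / of_nat ap else 0) * (if rB = x \<and> sB = y then 1 / of_nat bp else 0))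
         = (\<Sum>k<ap. (if rA = k \<and> sA = k then 1 / of_nat ap else 0)) * (if rB = x \<and> sB = y then 1 / of_nat bp else (0::complex))"
        by (simp only: sum_distrib_right)
      ultimately show ?thesis by simp
    qed
    also have "\<dots> = ((if rA = sA then 1 / of_nat ap else 0) \<cdot>\<^sub>m E) $$ (x,y)"
    proof -
      have "E $$ (x,y) = max_ent bp $$ (rB*bp+x, sB*bp+y)" using xy by (simp add: E_def mat_block_def)
      also have "\<dots> = (if rB = x \<and> sB = y then 1 / of_nat bp else 0)" using max_ent_index[of rB bp x sB y] xy c by simp
      finally have e: "E $$ (x,y) = (if rB = x \<and> sB = y then 1 / of_nat bp else 0)" .
      have "((if rA = sA then 1 / of_nat ap else 0) \<cdot>\<^sub>m E) $$ (x,y) = (if rA = sA then 1 / of_nat ap else 0) * E $$ (x,y)"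
        using xy Ec by simp
      thus ?thesis unfolding e by simp
    qed
    finally show "ptrace1 ap bp (mat_block (ap*bp) W r s) $$ (x,y) = ((if rA = sA then 1 / of_nat ap else 0) \<cdot>\<^sub>m E) $$ (x,y)" .
  qed (auto simp: E_def mat_block_def ptrace1_def)
  thus ?thesis unfolding r_def s_def E_def .
qed

lemma index_replacer_output:
  fixes ap bp a b :: nat and M :: "complex mat \<Rightarrow> complex mat"
  assumes ap: "ap > 0" and bp: "bp > 0" and Mc: "quantum_channel bp b M"
    and c: "rA < ap" "rB < bp" "al < a" "be < b" "sA < ap" "sB < bp" "al' < a" "be' < b"
  shows "id_tensor_map (ap*bp) (ap*bp) (a*b) (replacer_tensor ap bp a M)
          (reorder_mat ap ap bp bp * tensor_mat (max_ent ap) (max_ent bp) * adj (reorder_mat ap ap bp bp))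
           $$ ((rA*bp+rB)*(a*b) + (al*b+be), (sA*bp+sB)*(a*b) + (al'*b+be'))
       = (if rA = sA \<and> al = al' then complex_of_real (1 / real ap) *
           id_tensor_map bp bp b M (max_ent bp) $$ (rB*b+be, sB*b+be') else 0)"
proof -
  let ?W = "reorder_mat ap ap bp bp * tensor_mat (max_ent ap) (max_ent bp) * adj (reorder_mat ap ap bp bp)"
  define r where "r = rA*bp+rB"
  define s where "s = sA*bp+sB"
  have r: "r < ap*bp" "s < ap*bp" unfolding r_def s_def using index_pair_less c by auto
  have o: "al*b+be < a*b" "al'*b+be' < a*b" using index_pair_less c by auto
  have lin: "linear_map bp b M" using Mc by (simp add: quantum_channel_def completely_positive_def)
  define E where "E = mat_block bp (max_ent bp) rB sB"
  have Ec: "E \<in> carrier_mat bp bp" by (simp add: E_def mat_block_def)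
  have MEc: "M E \<in> carrier_mat b b" using lin Ec by (simp add: linear_map_def)
  note pt = ptrace1_reordered_max_ent_block[OF ap bp c(1,2,5,6), folded r_def s_def E_def]
  have "id_tensor_map (ap*bp) (ap*bp) (a*b) (replacer_tensor ap bp a M) ?W
           $$ (r*(a*b) + (al*b+be), s*(a*b) + (al'*b+be'))
      = replacer_tensor ap bp a M (mat_block (ap*bp) ?W r s) $$ (al*b+be, al'*b+be')"
    using index_id_tensor_map index_pair_less[OF r(1) o(1)] index_pair_less[OF r(2) o(2)] o by simp
  also have "replacer_tensor ap bp a M (mat_block (ap*bp) ?W r s) = tensor_mat (1\<^sub>m a) ((if rA = sA then 1 / of_nat ap else 0) \<cdot>\<^sub>m M E)"
    unfolding replacer_tensor_def pt using linear_map_smult[OF lin Ec] by simp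
  also have "\<dots> $$ (al*b+be, al'*b+be') = (if al = al' then 1 else 0) * ((if rA = sA then 1 / of_nat ap else 0) * M E $$ (be, be'))"
    using index_tensor_mat[of "al*b+be" "1\<^sub>m a" "(if rA = sA then 1 / of_nat ap else 0) \<cdot>\<^sub>m M E" "al'*b+be'"] o MEc c
    by simp
  also have "M E $$ (be, be') = id_tensor_map bp bp b M (max_ent bp) $$ (rB*b+be, sB*b+be')"
    using index_pair_less c by (simp add: id_tensor_map_def E_def mat_block_def)
  finally show ?thesis unfolding r_def s_def by (auto simp: of_real_divide)
qed

lemma reordered_replacer_output:
  fixes ap bp a b :: nat and M :: "complex mat \<Rightarrow> complex mat"
  assumes ap: "ap > 0" and bp: "bp > 0" and Mc: "quantum_channel bp b M"
  shows "reorder_mat ap bp a b * id_tensor_map (ap*bp) (ap*bp) (a*b) (replacer_tensor ap bp a M)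
          (reorder_mat ap ap bp bp * tensor_mat (max_ent ap) (max_ent bp) * adj (reorder_mat ap ap bp bp)) * adj (reorder_mat ap bp a b)
     = mat (ap*a*(bp*b)) (ap*a*(bp*b)) (\<lambda>(i,j). if i div (bp*b) = j div (bp*b)
          then complex_of_real (1 / real ap) * id_tensor_map bp bp b M (max_ent bp) $$ (i mod (bp*b), j mod (bp*b)) else 0)"
  (is "?Q * ?Y * adj ?Q = ?R")
proof -
  define N where "N = ap*(a*bp)*b"
  note gp = reorder_mat_permutation[OF N_def]
  have NN: "ap*a*(bp*b) = N" "ap*bp*(a*b) = N" by (simp_all add: N_def ac_simps)
  have Yc: "?Y \<in> carrier_mat N N" unfolding carrier_mat_def id_tensor_map_def using NN by simp
  show ?thesis
  proof (rule eq_matI)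
    fix i j assume "i < dim_row ?R" "j < dim_col ?R"
    hence ij: "i < N" "j < N" using NN by auto
    obtain x y z w where c: "x < ap" "y < a" "z < bp" "w < b" "i = (x*(a*bp) + (y*bp+z))*b + w"
      using index_quad_split[of i ap a bp b] ij N_def by auto
    obtain x' y' z' w' where c': "x' < ap" "y' < a" "z' < bp" "w' < b" "j = (x'*(a*bp) + (y'*bp+z'))*b + w'"
      using index_quad_split[of j ap a bp b] ij N_def by auto
    have gi: "reorder_perm ap bp a b i = (x*bp+z)*(a*b) + (y*b+w)"
      using reorder_perm_index[OF c(1-4)] c(5) by (simp add: algebra_simps)
    have gj: "reorder_perm ap bp a b j = (x'*bp+z')*(a*b) + (y'*b+w')"
      using reorder_perm_index[OF c'(1-4)] c'(5) by (simp add: algebra_simps)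
    have "(?Q * ?Y * adj ?Q) $$ (i,j) = ?Y $$ (reorder_perm ap bp a b i, reorder_perm ap bp a b j)"
      using permutation_mat_unitary_conj(2)[OF gp(1) gp(2) gp(3) gp(4) Yc ij] .
    also have "\<dots> = (if x = x' \<and> y = y' then complex_of_real (1 / real ap) *
           id_tensor_map bp bp b M (max_ent bp) $$ (z*b+w, z'*b+w') else 0)"
      unfolding gi gj using index_replacer_output[OF ap bp Mc c(1) c(3) c(2) c(4) c'(1) c'(3) c'(2) c'(4)] .
    also have "\<dots> = ?R $$ (i,j)"
    proof -
      have ii: "i = (x*a+y)*(bp*b) + (z*b+w)" using c(5) by (simp add: algebra_simps)
      have jj: "j = (x'*a+y')*(bp*b) + (z'*b+w')" using c'(5) by (simp add: algebra_simps)
      have zb: "z*b+w < bp*b" "z'*b+w' < bp*b" using index_pair_less c c' by auto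
      have "?R $$ (i,j) = (if i div (bp*b) = j div (bp*b)
          then complex_of_real (1 / real ap) * id_tensor_map bp bp b M (max_ent bp) $$ (i mod (bp*b), j mod (bp*b)) else 0)"
        using ij NN by simp
      also have "\<dots> = (if x*a+y = x'*a+y' then complex_of_real (1 / real ap) *
           id_tensor_map bp bp b M (max_ent bp) $$ (z*b+w, z'*b+w') else 0)"
        unfolding ii jj using zb by simp
      finally show ?thesis using index_pair_eq_iff[OF c(2) c'(2)] by simp
    qed
    finally show "(?Q * ?Y * adj ?Q) $$ (i,j) = ?R $$ (i,j)" .
  qed (use NN gp(1) Yc in \<open>auto intro: adj_carrier\<close>)
qed

lemma tensor_one_smult_eq_mat:
  assumes \<sigma>: "\<sigma> \<in> carrier_mat L L"
  shows "tensor_mat (1\<^sub>m K) (c \<cdot>\<^sub>m \<sigma>)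
    = mat (K*L) (K*L) (\<lambda>(i,j). if i div L = j div L then c * \<sigma> $$ (i mod L, j mod L) else 0)"
proof (rule eq_matI)
  fix i j assume "i < dim_row (mat (K*L) (K*L) (\<lambda>(i,j). if i div L = j div L then c * \<sigma> $$ (i mod L, j mod L) else 0))"
    "j < dim_col (mat (K*L) (K*L) (\<lambda>(i,j). if i div L = j div L then c * \<sigma> $$ (i mod L, j mod L) else (0::complex)))"
  hence i: "i < K*L" and j: "j < K*L" by simp_all
  show "tensor_mat (1\<^sub>m K) (c \<cdot>\<^sub>m \<sigma>) $$ (i,j)
    = mat (K*L) (K*L) (\<lambda>(i,j). if i div L = j div L then c * \<sigma> $$ (i mod L, j mod L) else 0) $$ (i,j)"
    using index_tensor_one[OF smult_carrier_mat[OF \<sigma>] i j] index_pair_bounds[OF i] index_pair_bounds[OF j] i j \<sigma>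
    by simp
qed (use \<sigma> in simp_all)

section \<open>Testing on maximally entangled inputs\<close>

lemma bidir_div_ge_max_ent:
  assumes "0 < dA'" "0 < dB'"
  shows "rel_entropy (dA'*dB'*(dA*dB))
           (apply_bipartite dA' dB' dA' dB' dA dB K (max_ent dA') (max_ent dB'))
           (apply_bipartite dA' dB' dA' dB' dA dB L (max_ent dA') (max_ent dB'))
         \<le> bidir_div dA' dB' dA dB K L"
proof -
  have "(dA', dB', max_ent dA', max_ent dB')
      \<in> {(rA, rB, \<rho>, \<omega>). density_mat (rA*dA') \<rho> \<and> density_mat (rB*dB') \<omega>}"
    using max_ent_density assms by simp
  thus ?thesis unfolding bidir_div_def by (rule SUP_upper2) simp
qed

lemma hermitian_tensor_one_smult:
  assumes "hermitian_mat L \<sigma>"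
  shows "hermitian_mat (K*L) (tensor_mat (1\<^sub>m K) (complex_of_real c \<cdot>\<^sub>m \<sigma>))"
  using assms by (simp add: hermitian_mat_def adj_tensor_mat adj_smult)

lemma choi_state_reorder:
  "choi_state dA' dB' dA dB N = reorder_mat dA' dB' dA dB
     * apply_bipartite dA' dB' dA' dB' dA dB N (max_ent dA') (max_ent dB') * adj (reorder_mat dA' dB' dA dB)"
  unfolding choi_state_def Let_def reorder_mat_def ..

lemma unitary_reorder_mat: "unitary_mat (n1*(n*m)*n4) (reorder_mat n1 m n n4)"
  using permutation_mat_unitary_conj(1)[OF reorder_mat_permutation[OF refl]] .

lemma density_apply_bipartite_max_ent:
  assumes "0 < dA'" "0 < dB'" "quantum_channel (dA' * dB') (dA * dB) N"
  shows "density_mat (dA'*dB'*(dA*dB)) (apply_bipartite dA' dB' dA' dB' dA dB N (max_ent dA') (max_ent dB'))"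
  using apply_bipartite_max_ent_density[OF assms] by (simp add: density_mat_def)

lemma density_choi_state:
  assumes ap: "0 < dA'" and bp: "0 < dB'" and N: "quantum_channel (dA' * dB') (dA * dB) N"
  shows "density_mat (dA'*dA*(dB'*dB)) (choi_state dA' dB' dA dB N)"
proof -
  define n where "n = dA'*dA*(dB'*dB)"
  define X where "X = apply_bipartite dA' dB' dA' dB' dA dB N (max_ent dA') (max_ent dB')"
  have Q: "unitary_mat n (reorder_mat dA' dB' dA dB)"
    using unitary_reorder_mat[of dA' dA dB' dB] by (simp add: n_def ac_simps)
  have X: "density_mat n X"
    using density_apply_bipartite_max_ent[OF ap bp N] by (simp add: X_def n_def ac_simps)
  hence "X \<in> carrier_mat n n" by (simp add: density_mat_def psd_mat_def hermitian_mat_def)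
  thus ?thesis
    using X psd_conj[OF _ unitaryD(1)[OF Q]] mtrace_unitary_conj[OF Q]
    unfolding choi_state_reorder X_def[symmetric] n_def[symmetric] by (simp add: density_mat_def)
qed

text \<open>Up to a permutation \<open>Q\<close> of the tensor factors, the output of \<open>\<N>\<close> on the maximally entangled
  inputs is \<open>\<Phi>\<^sup>\<N>\<close> and that of \<open>\<R> \<otimes> \<M>\<close> is \<open>1 \<otimes> \<sigma>\<^sub>M / |A'|\<close>, with \<open>\<sigma>\<^sub>M\<close> the Choi state of \<open>\<M>\<close>.\<close>
lemma rel_entropy_max_ent_replacer_ge:
  fixes N M :: "complex mat \<Rightarrow> complex mat"
  assumes ap: "0 < dA'" and bp: "0 < dB'"
    and N: "quantum_channel (dA' * dB') (dA * dB) N" and M: "quantum_channel dB' dB M"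
  shows "ereal (ln (real dA') - cond_entropy (dA' * dA) (dB' * dB) (choi_state dA' dB' dA dB N))
    \<le> rel_entropy (dA'*dB'*(dA*dB))
         (apply_bipartite dA' dB' dA' dB' dA dB N (max_ent dA') (max_ent dB'))
         (apply_bipartite dA' dB' dA' dB' dA dB (replacer_tensor dA' dB' dA M) (max_ent dA') (max_ent dB'))"
proof -
  define K L n where "K = dA'*dA" and "L = dB'*dB" and "n = dA'*dB'*(dA*dB)"
  have nKL: "n = K*L" by (simp add: n_def K_def L_def ac_simps)
  define Q where "Q = reorder_mat dA' dB' dA dB"
  define X where "X = apply_bipartite dA' dB' dA' dB' dA dB N (max_ent dA') (max_ent dB')"
  define Y where "Y = apply_bipartite dA' dB' dA' dB' dA dB (replacer_tensor dA' dB' dA M) (max_ent dA') (max_ent dB')"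
  define \<sigma> where "\<sigma> = id_tensor_map dB' dB' dB M (max_ent dB')"
  define Y' where "Y' = tensor_mat (1\<^sub>m K) (complex_of_real (1 / real dA') \<cdot>\<^sub>m \<sigma>)"
  have Qu: "unitary_mat n Q"
    using unitary_reorder_mat[of dA' dA dB' dB] by (simp add: Q_def n_def ac_simps)
  have \<sigma>c: "\<sigma> \<in> carrier_mat L L" unfolding \<sigma>_def L_def carrier_mat_def by (simp add: id_tensor_dims)
  have "Y' = mat (K*L) (K*L) (\<lambda>(i,j). if i div L = j div L
      then complex_of_real (1 / real dA') * \<sigma> $$ (i mod L, j mod L) else 0)"
    unfolding Y'_def by (rule tensor_one_smult_eq_mat[OF \<sigma>c])
  hence QY: "Q * Y * adj Q = Y'"
    unfolding Q_def Y_def \<sigma>_def K_def L_def apply_bipartite_def Let_def reorder_mat_def[symmetric]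
    using reordered_replacer_output[OF ap bp M] by simp
  have \<sigma>: "density_mat L \<sigma>"
    using id_tensor_map_max_ent_density[OF bp M] unfolding \<sigma>_def L_def by (simp add: density_mat_def)
  have hY': "hermitian_mat n Y'"
    unfolding Y'_def nKL using \<sigma> by (intro hermitian_tensor_one_smult) (simp add: density_mat_def psd_mat_def)
  have Yc: "Y \<in> carrier_mat n n"
    unfolding Y_def apply_bipartite_def Let_def carrier_mat_def n_def by (simp add: id_tensor_dims)
  have "Y = adj Q * Y' * Q" using unitary_adj_conj_conj[OF Qu Yc] QY by simp
  hence hY: "hermitian_mat n Y" using hermitian_conj[OF hY' adj_carrier[OF unitaryD(1)[OF Qu]]] by simp
  have hX: "hermitian_mat n X"
    using density_apply_bipartite_max_ent[OF ap bp N] by (simp add: X_def n_def density_mat_def psd_mat_def)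
  have "rel_entropy n X Y = rel_entropy (K*L) (choi_state dA' dB' dA dB N) Y'"
    using rel_entropy_unitary_conj[OF Qu hX hY] QY nKL unfolding choi_state_reorder Q_def X_def by simp
  moreover have "ereal (- ln (1 / real dA') - cond_entropy K L (choi_state dA' dB' dA dB N))
      \<le> rel_entropy (K*L) (choi_state dA' dB' dA dB N) Y'"
    unfolding Y'_def K_def L_def
    by (rule rel_entropy_tensor_one_ge[OF density_choi_state[OF ap bp N] \<sigma>[unfolded L_def]]) (use ap in simp)
  ultimately show ?thesis using ap by (simp add: X_def Y_def n_def K_def L_def ln_div)
qed

theorem mainTheorem18:
  fixes dA' dB' dA dB :: nat and N :: "complex mat \<Rightarrow> complex mat"
  assumes "0 < dA'" "0 < dB'" "0 < dA" "0 < dB"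
    and "quantum_channel (dA' * dB') (dA * dB) N"
  shows "ereal (ln (real dA')) \<le>
           ereal (cond_entropy (dA' * dA) (dB' * dB) (choi_state dA' dB' dA dB N))
           - bidir_cond_entropy dA' dB' dA dB N"
proof -
  define S where "S = cond_entropy (dA' * dA) (dB' * dB) (choi_state dA' dB' dA dB N)"
  define I where "I = (INF M \<in> {M. quantum_channel dB' dB M}. bidir_div dA' dB' dA dB N (replacer_tensor dA' dB' dA M))"
  have "ereal (ln (real dA') - S) \<le> I"
    unfolding I_def S_def
    using order.trans[OF rel_entropy_max_ent_replacer_ge bidir_div_ge_max_ent] assms
    by (intro INF_greatest) blast
  hence "ereal (ln (real dA')) \<le> ereal S - - I"
    by (cases I) auto
  thus ?thesis unfolding bidir_cond_entropy_def I_def S_def .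
qed

end
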